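(* Let $V=\{t_0^2t_2=t_1^2t_3\}\setminus\{t_0=t_1=0\}\subseteq\mathbb P^3_{\mathbb Q}$ and $c_{V,\mathbb Q}=c_{\mathbb P^1,\mathbb Q}(Z_{\mathbb Q}(\mathbb P^1,3)+1)$. Then as $B\to\infty$, $$\#\{(\mathbf x,\mathbf y)\in V(\mathbb Q)^2: H_{\mathbb Q}(\mathbf x)H_{\mathbb Q}(\mathbf y)\le B\}\sim 2c_{V,\mathbb Q}^2\,B^2\log B .$$
   Context: $H_{\mathbb Q}(x_0:\dots:x_3)=\max_i|x_i|$ for coprime integers $x_i$. $Z_{\mathbb Q}(\mathbb P^1,s)=\sum_{\mathbf x\in\mathbb P^1(\mathbb Q)}H_{\mathbb Q}(\mathbf x)^{-s}$, and $c_{\mathbb P^1,\mathbb Q}=\frac{2}{\zeta(2)}$ is the constant with $\#\{\mathbf x\in\mathbb P^1(\mathbb Q):H_{\mathbb Q}(\mathbf x)\le B\}\sim c_{\mathbb P^1,\mathbb Q}B^2$. *)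

theory Defs
  imports "HOL-Analysis.Analysis" "HOL-Library.Landau_Symbols"
begin

type_synonym vec4 = "int \<times> int \<times> int \<times> int"

(* Projective points are represented as the set {v, -v} of the two primitive
   integer representatives. *)

definition neg4 :: "vec4 \<Rightarrow> vec4" where
  "neg4 v = (case v of (a,b,c,d) \<Rightarrow> (-a,-b,-c,-d))"

definition primitive4 :: "vec4 \<Rightarrow> bool" where
  "primitive4 v = (case v of (a,b,c,d) \<Rightarrow> Gcd {a,b,c,d} = (1::int))"

definition hgt4 :: "vec4 \<Rightarrow> real" where
  "hgt4 v = (case v of (a,b,c,d) \<Rightarrow> real_of_int (max (max \<bar>a\<bar> \<bar>b\<bar>) (max \<bar>c\<bar> \<bar>d\<bar>)))"

definition H3 :: "vec4 set \<Rightarrow> real" where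
  "H3 P = Max (hgt4 ` P)"

definition V_Q :: "vec4 set set" where
  "V_Q = {{v, neg4 v} | v. primitive4 v \<and>
     (case v of (x0,x1,x2,x3) \<Rightarrow> x0^2 * x2 = x1^2 * x3 \<and> \<not> (x0 = 0 \<and> x1 = 0))}"

definition P1_Q :: "(int \<times> int) set set" where
  "P1_Q = {{(a,b), (-a,-b)} | a b. coprime a b}"

definition H1 :: "(int \<times> int) set \<Rightarrow> real" where
  "H1 P = Max ((\<lambda>(a,b). real_of_int (max \<bar>a\<bar> \<bar>b\<bar>)) ` P)"

definition Z_P1 :: "real \<Rightarrow> real" where
  "Z_P1 s = infsum (\<lambda>P. H1 P powr (-s)) P1_Q"

definition zeta2 :: real where
  "zeta2 = (\<Sum>n. 1 / (real (Suc n))^2)"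

definition c_P1 :: real where
  "c_P1 = 2 / zeta2"

definition c_V :: real where
  "c_V = c_P1 * (Z_P1 3 + 1)"

definition count_pairs :: "real \<Rightarrow> nat" where
  "count_pairs B = card {(P, Q). P \<in> V_Q \<and> Q \<in> V_Q \<and> H3 P * H3 Q \<le> B}"

end

(*
  Every point of V(Q) has a unique representative (g a, g b, u b^2, u a^2) with a, b coprime,
  g >= 1 and g, u coprime, and its height is max (g h, |u| h^2) where h = max (|a|, |b|).
  For fixed (a, b) the admissible (g, u) are coprime pairs in a box, counted by Moebius
  inversion, so the number of points of V(Q) of height at most n is asymptotic to c_V n^2:
  the points with u = 0 give the summand c_P1 n^2, the others c_P1 Z(P^1, 3) n^2.

  For any set whose counting function A(n) is asymptotic to c n^2, the pairs with product of
  heights at most N number sum_k a_k A(N div k). Abel summation gives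
  sum_(k <= N) a_k / k^2 ~ 2 c log N, so replacing A(N div k) by c (N / k)^2 yields
  2 c^2 N^2 log N, and the error of this replacement is small compared to the main term.
*)
theory Submission
  imports Defs "HOL-Computational_Algebra.Squarefree" "HOL-Real_Asymp.Real_Asymp"
begin

section \<open>Pairs of points whose heights have bounded product\<close>

lemma summation_by_parts_nat:
  fixes a g :: "nat \<Rightarrow> real"
  shows "(\<Sum>k=1..N. a k * g k) =
           (\<Sum>j=1..N. a j) * g N + (\<Sum>k<N. (\<Sum>j=1..k. a j) * (g k - g (Suc k)))"
  by (induction N) (simp_all add: algebra_simps)

lemma tendsto_sum_ratio:
  fixes t u :: "nat \<Rightarrow> real"
  assumes u: "\<And>k. u k > 0" and lim: "(\<lambda>k. t k / u k) \<longlonglongrightarrow> L"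
    and diverge: "filterlim (\<lambda>N. \<Sum>k<N. u k) at_top sequentially"
  shows "(\<lambda>N. (\<Sum>k<N. t k) / (\<Sum>k<N. u k)) \<longlonglongrightarrow> L"
proof (rule LIMSEQ_I)
  fix r :: real assume r: "r > 0"
  obtain K where K: "\<And>k. k \<ge> K \<Longrightarrow> \<bar>t k / u k - L\<bar> < r/2"
    using lim r unfolding lim_sequentially dist_real_def by (meson half_gt_zero)
  have tail: "\<bar>t k - L * u k\<bar> \<le> r/2 * u k" if "k \<ge> K" for k
  proof -
    have "\<bar>t k - L * u k\<bar> = \<bar>t k / u k - L\<bar> * u k"
      using u[of k] by (simp add: field_simps abs_mult)
    also have "\<dots> \<le> r/2 * u k" using K[OF that] u[of k] by (intro mult_right_mono) auto
    finally show ?thesis .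
  qed
  define C where "C = (\<Sum>k<K. \<bar>t k - L * u k\<bar>)"
  have "C \<ge> 0" unfolding C_def by (intro sum_nonneg) auto
  obtain N0 where N0: "\<And>N. N \<ge> N0 \<Longrightarrow> (\<Sum>k<N. u k) > 2 * C / r"
    using diverge unfolding filterlim_at_top_dense eventually_sequentially by blast
  show "\<exists>N0. \<forall>N\<ge>N0. norm ((\<Sum>k<N. t k) / (\<Sum>k<N. u k) - L) < r"
  proof (intro exI allI impI)
    fix N assume N: "N \<ge> max N0 K"
    define U where "U = (\<Sum>k<N. u k)"
    have "2 * C / r < U" using N0[of N] N by (simp add: U_def)
    with r \<open>C \<ge> 0\<close> have U: "U > 0" "C < r/2 * U"
      by (auto simp: field_simps intro: le_less_trans[of 0 "2 * C / r"])
    have "{..<N} = {..<K} \<union> {K..<N}" using N by auto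
    then have "\<bar>(\<Sum>k<N. t k) - L * U\<bar> \<le> C + (\<Sum>k\<in>{K..<N}. \<bar>t k - L * u k\<bar>)"
      unfolding C_def U_def sum_distrib_left sum_subtractf[symmetric]
      by (metis (no_types) sum_abs ivl_disj_int_one(2) finite_lessThan finite_atLeastLessThan
            sum.union_disjoint)
    also have "\<dots> \<le> C + (\<Sum>k<N. r/2 * u k)"
      using tail u r
      by (intro add_left_mono order.trans[OF sum_mono sum_mono2]) (auto intro: less_imp_le)
    also have "\<dots> = C + r/2 * U" by (simp add: U_def sum_distrib_left)
    also have "\<dots> < r * U" using U by simp
    finally have "\<bar>(\<Sum>k<N. t k) - L * U\<bar> / U < r" using U by (simp add: divide_less_eq)
    moreover have "(\<Sum>k<N. t k) / U - L = ((\<Sum>k<N. t k) - L * U) / U" using U by (simp add: field_simps)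
    ultimately show "norm ((\<Sum>k<N. t k) / (\<Sum>k<N. u k) - L) < r" using U by (simp add: U_def)
  qed
qed

lemma harm_over_ln_tendsto: "(\<lambda>N. harm N / ln (real N)) \<longlonglongrightarrow> (1::real)"
proof -
  have "(\<lambda>N. (harm N - ln (real N)) * inverse (ln (real N)) + 1) \<longlonglongrightarrow> euler_mascheroni * 0 + (1::real)"
    by (intro tendsto_intros euler_mascheroni_LIMSEQ) real_asymp
  moreover have "\<forall>\<^sub>F N in sequentially. (harm N - ln (real N)) * inverse (ln (real N)) + 1 = harm N / ln (real N)"
    using eventually_gt_at_top[of 1] by eventually_elim (simp add: field_simps)
  ultimately show ?thesis by (simp add: tendsto_cong)
qed

lemma inverse_square_weighted_sum_asymp:
  fixes a :: "nat \<Rightarrow> real"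
  assumes lim: "(\<lambda>n. (\<Sum>k=1..n. a k) / real n ^ 2) \<longlonglongrightarrow> c"
  shows "(\<lambda>N. (\<Sum>k=1..N. a k / real k ^ 2) / ln (real N)) \<longlonglongrightarrow> 2 * c"
proof -
  define A where "A k = (\<Sum>j=1..k. a j)" for k
  define t where "t k = A k * (1 / real k ^ 2 - 1 / real (Suc k) ^ 2)" for k
  have limA: "(\<lambda>k. A k / real k ^ 2) \<longlonglongrightarrow> c" using lim by (simp add: A_def)
  have abel: "(\<Sum>k=1..N. a k / real k ^ 2) = A N / real N ^ 2 + (\<Sum>k<N. t k)" for N
    using summation_by_parts_nat[of a "\<lambda>k. 1 / real k ^ 2" N] by (simp add: A_def t_def)
  have "(\<lambda>k. t k / (1 / real (Suc k))) \<longlonglongrightarrow> 2 * c"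
  proof -
    have "(\<lambda>k. A k / real k ^ 2 * ((2 * real k + 1) / (real k + 1))) \<longlonglongrightarrow> c * 2"
      by (intro tendsto_mult limA) real_asymp
    moreover have "\<forall>\<^sub>F k in sequentially.
        A k / real k ^ 2 * ((2 * real k + 1) / (real k + 1)) = t k / (1 / real (Suc k))"
      using eventually_gt_at_top[of 0]
    proof eventually_elim
      case (elim k)
      then have "1 / real k ^ 2 - 1 / (real k + 1) ^ 2 = (2 * real k + 1) / (real k ^ 2 * (real k + 1) ^ 2)"
        by (simp add: divide_simps) (simp add: power2_eq_square algebra_simps)
      with elim show ?case
        by (simp add: t_def add.commute) (simp add: divide_simps power2_eq_square)
    qed
    ultimately show ?thesis by (simp add: tendsto_cong mult.commute)
  qed
  moreover have harm_eq: "(\<Sum>k<N. 1 / real (Suc k)) = harm N" for N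
    by (simp add: harm_altdef inverse_eq_divide)
  ultimately have "(\<lambda>N. (\<Sum>k<N. t k) / harm N) \<longlonglongrightarrow> 2 * c"
    using tendsto_sum_ratio[of "\<lambda>k. 1 / real (Suc k)" t] harm_at_top by simp
  then have "(\<lambda>N. A N / real N ^ 2 * inverse (ln (real N)) + (\<Sum>k<N. t k) / harm N * (harm N / ln (real N)))
      \<longlonglongrightarrow> c * 0 + 2 * c * 1"
    by (intro tendsto_intros limA harm_over_ln_tendsto) real_asymp
  moreover have "\<forall>\<^sub>F N in sequentially.
      A N / real N ^ 2 * inverse (ln (real N)) + (\<Sum>k<N. t k) / harm N * (harm N / ln (real N))
      = (\<Sum>k=1..N. a k / real k ^ 2) / ln (real N)"
    using eventually_gt_at_top[of 1]
  proof eventually_elim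
    case (elim N)
    then have "harm N > (0::real)" "ln (real N) > 0" by (auto intro: harm_pos)
    then have "harm N \<noteq> (0::real)" "ln (real N) > 0" by linarith+
    then show ?case unfolding abel by (simp add: field_simps)
  qed
  ultimately show ?thesis by (simp add: tendsto_cong)
qed

lemma inverse_weighted_sum_le:
  fixes a :: "nat \<Rightarrow> real"
  assumes "C \<ge> 0" and bound: "\<And>k. (\<Sum>j=1..k. a j) \<le> C * real k ^ 2"
  shows "(\<Sum>k=1..N. a k / real k) \<le> 2 * C * real N"
proof -
  define A where "A k = (\<Sum>j=1..k. a j)" for k
  have "(\<Sum>k=1..N. a k / real k) = A N / real N + (\<Sum>k<N. A k * (1 / real k - 1 / real (Suc k)))"
    using summation_by_parts_nat[of a "\<lambda>k. 1 / real k" N] by (simp add: A_def)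
  also have "(\<Sum>k<N. A k * (1 / real k - 1 / real (Suc k))) = (\<Sum>k<N. A k / (real k * (real k + 1)))"
  proof (intro sum.cong refl)
    fix k show "A k * (1 / real k - 1 / real (Suc k)) = A k / (real k * (real k + 1))"
      by (cases "k = 0") (simp_all add: A_def field_simps)
  qed
  also have "A N / real N \<le> C * real N"
    using bound[of N] by (cases "N = 0") (auto simp: A_def divide_le_eq power2_eq_square)
  also have "(\<Sum>k<N. A k / (real k * (real k + 1))) \<le> (\<Sum>k<N. C)"
  proof (intro sum_mono)
    fix k
    have "A k / (real k * (real k + 1)) \<le> C * real k ^ 2 / (real k * (real k + 1))"
      using bound[of k] by (intro divide_right_mono) (auto simp: A_def)
    also have "\<dots> \<le> C"
      using \<open>C \<ge> 0\<close> by (cases "k = 0") (auto simp: divide_le_eq power2_eq_square mult_left_mono)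
    finally show "A k / (real k * (real k + 1)) \<le> C" .
  qed
  finally show ?thesis by simp
qed

lemma real_div_nat_ge: "real n / real k - 1 \<le> real (n div k)"
  using real_of_int_div3[of "int n" "int k"] by (simp add: zdiv_int[symmetric])

lemma tendsto_ratio_imp_error_bound:
  fixes A :: "nat \<Rightarrow> real"
  assumes lim: "(\<lambda>m. A m / real m ^ 2) \<longlonglongrightarrow> c" and "\<epsilon> > 0"
  obtains K where "\<And>m. \<bar>A m - c * real m ^ 2\<bar> \<le> \<epsilon> * real m ^ 2 + K"
proof -
  obtain M where M: "\<And>m. m \<ge> M \<Longrightarrow> \<bar>A m / real m ^ 2 - c\<bar> < \<epsilon>"
    using lim \<open>\<epsilon> > 0\<close> unfolding lim_sequentially dist_real_def by blast
  define K where "K = (\<Sum>m<max M 1. \<bar>A m - c * real m ^ 2\<bar>)"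
  show thesis
  proof (rule that[of K])
    fix m
    show "\<bar>A m - c * real m ^ 2\<bar> \<le> \<epsilon> * real m ^ 2 + K"
    proof (cases "m < max M 1")
      case True
      then have "\<bar>A m - c * real m ^ 2\<bar> \<le> K" unfolding K_def by (intro member_le_sum) auto
      then show ?thesis using \<open>\<epsilon> > 0\<close> by (simp add: add_increasing)
    next
      case False
      then have "m \<ge> M" "real m ^ 2 > 0" by auto
      then have "\<bar>A m - c * real m ^ 2\<bar> = \<bar>A m / real m ^ 2 - c\<bar> * real m ^ 2"
        by (simp add: field_simps abs_mult)
      also have "\<dots> \<le> \<epsilon> * real m ^ 2"
        using M[OF \<open>m \<ge> M\<close>] by (intro mult_right_mono) auto
      moreover have "K \<ge> 0" unfolding K_def by (intro sum_nonneg) auto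
      ultimately show ?thesis by linarith
    qed
  qed
qed

lemma tendsto_ratio_imp_square_bound:
  fixes a :: "nat \<Rightarrow> real"
  assumes lim: "(\<lambda>n. (\<Sum>k=1..n. a k) / real n ^ 2) \<longlonglongrightarrow> c"
  obtains C where "C \<ge> 0" "\<And>m. (\<Sum>j=1..m. a j) \<le> C * real m ^ 2"
proof -
  obtain K where K: "\<And>m. \<bar>(\<Sum>j=1..m. a j) - c * real m ^ 2\<bar> \<le> 1 * real m ^ 2 + K"
    using tendsto_ratio_imp_error_bound[OF lim, of 1] by auto
  have "(\<Sum>j=1..m. a j) \<le> (\<bar>c\<bar> + 1 + \<bar>K\<bar>) * real m ^ 2" for m
  proof (cases "m = 0")
    case False
    then have "real m ^ 2 \<ge> 1" by simp
    then have "\<bar>K\<bar> \<le> \<bar>K\<bar> * real m ^ 2" "c * real m ^ 2 \<le> \<bar>c\<bar> * real m ^ 2"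
      using mult_left_mono[of 1 "real m ^ 2" "\<bar>K\<bar>"] by (auto intro: mult_right_mono)
    with K[of m] show ?thesis by (simp add: algebra_simps)
  qed simp
  then show thesis by (rule that[rotated]) simp
qed

lemma sum_div_square_le:
  fixes a :: "nat \<Rightarrow> real"
  assumes "\<And>k. a k \<ge> 0"
  shows "(\<Sum>k=1..N. a k * real (N div k) ^ 2) \<le> real N ^ 2 * (\<Sum>k=1..N. a k / real k ^ 2)"
proof -
  have "(\<Sum>k=1..N. a k * real (N div k) ^ 2) \<le> (\<Sum>k=1..N. a k * (real N / real k) ^ 2)"
    using assms by (intro sum_mono mult_left_mono power_mono of_nat_div_le_of_nat) auto
  also have "\<dots> = real N ^ 2 * (\<Sum>k=1..N. a k / real k ^ 2)"
    by (simp add: sum_distrib_left power_divide mult.commute)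
  finally show ?thesis .
qed

lemma sum_div_square_ge:
  fixes a :: "nat \<Rightarrow> real"
  assumes nonneg: "\<And>k. a k \<ge> 0" and "C \<ge> 0" and bound: "\<And>m. (\<Sum>j=1..m. a j) \<le> C * real m ^ 2"
  shows "real N ^ 2 * (\<Sum>k=1..N. a k / real k ^ 2) - 4 * C * real N ^ 2
           \<le> (\<Sum>k=1..N. a k * real (N div k) ^ 2)"
proof -
  have "real N ^ 2 * (\<Sum>k=1..N. a k / real k ^ 2) - 2 * real N * (\<Sum>k=1..N. a k / real k)
      = (\<Sum>k=1..N. a k * ((real N / real k) ^ 2 - 2 * (real N / real k)))"
    by (simp add: sum_distrib_left sum_subtractf power_divide algebra_simps)
  also have "\<dots> \<le> (\<Sum>k=1..N. a k * real (N div k) ^ 2)"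
  proof (intro sum_mono mult_left_mono)
    fix k assume k: "k \<in> {1..N}"
    have "(real N / real k) ^ 2 - 2 * (real N / real k) \<le> (real N / real k - 1) ^ 2"
      by (simp add: power2_eq_square algebra_simps)
    also have "\<dots> \<le> real (N div k) ^ 2"
      using k real_div_nat_ge[of N k] by (intro power_mono) (auto simp: field_simps)
    finally show "(real N / real k) ^ 2 - 2 * (real N / real k) \<le> real (N div k) ^ 2" .
  qed (use nonneg in auto)
  moreover have "2 * real N * (\<Sum>k=1..N. a k / real k) \<le> 2 * real N * (2 * C * real N)"
    by (intro mult_left_mono inverse_weighted_sum_le[OF \<open>C \<ge> 0\<close> bound]) simp
  moreover have "2 * real N * (2 * C * real N) = 4 * C * real N ^ 2" by (simp add: power2_eq_square)
  ultimately show ?thesis by linarith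
qed

lemma convolution_main_term_asymp:
  fixes a :: "nat \<Rightarrow> real"
  assumes nonneg: "\<And>k. a k \<ge> 0" and lim: "(\<lambda>n. (\<Sum>k=1..n. a k) / real n ^ 2) \<longlonglongrightarrow> c"
  shows "(\<lambda>N. (\<Sum>k=1..N. a k * real (N div k) ^ 2) / (real N ^ 2 * ln (real N))) \<longlonglongrightarrow> 2 * c"
proof -
  define S where "S N = (\<Sum>k=1..N. a k / real k ^ 2)" for N
  define M where "M N = (\<Sum>k=1..N. a k * real (N div k) ^ 2)" for N
  obtain C where "C \<ge> 0" and C: "\<And>m. (\<Sum>j=1..m. a j) \<le> C * real m ^ 2"
    using tendsto_ratio_imp_square_bound[OF lim] by blast
  have S: "(\<lambda>N. S N / ln (real N)) \<longlonglongrightarrow> 2 * c"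
    unfolding S_def by (rule inverse_square_weighted_sum_asymp[OF lim])
  show ?thesis
    unfolding M_def[symmetric]
  proof (rule tendsto_sandwich)
    show "\<forall>\<^sub>F N in sequentially. S N / ln (real N) - 4 * C / ln (real N) \<le> M N / (real N ^ 2 * ln (real N))"
      using eventually_gt_at_top[of 1]
    proof eventually_elim
      case (elim N)
      then have pos: "real N ^ 2 * ln (real N) > 0" "ln (real N) > 0" "real N > 0" by simp_all
      then have "S N / ln (real N) - 4 * C / ln (real N)
          = (real N ^ 2 * S N - 4 * C * real N ^ 2) / (real N ^ 2 * ln (real N))"
        by (simp add: field_simps)
      also have "\<dots> \<le> M N / (real N ^ 2 * ln (real N))"
        using sum_div_square_ge[OF nonneg \<open>C \<ge> 0\<close> C] pos
        by (intro divide_right_mono) (auto simp: S_def M_def)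
      finally show ?case .
    qed
    show "\<forall>\<^sub>F N in sequentially. M N / (real N ^ 2 * ln (real N)) \<le> S N / ln (real N)"
      using eventually_gt_at_top[of 1]
    proof eventually_elim
      case (elim N)
      then have pos: "real N ^ 2 * ln (real N) > 0" by simp
      then have "M N / (real N ^ 2 * ln (real N)) \<le> real N ^ 2 * S N / (real N ^ 2 * ln (real N))"
        using sum_div_square_le[OF nonneg] by (intro divide_right_mono) (auto simp: S_def M_def)
      also have "\<dots> = S N / ln (real N)" using pos by simp
      finally show ?case .
    qed
    have "(\<lambda>N. 4 * C / ln (real N)) \<longlonglongrightarrow> 0" by real_asymp
    from tendsto_diff[OF S this] show "(\<lambda>N. S N / ln (real N) - 4 * C / ln (real N)) \<longlonglongrightarrow> 2 * c"
      by simp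
  qed (fact S)
qed

lemma convolution_error_le:
  fixes a A :: "nat \<Rightarrow> real"
  assumes "\<And>k. a k \<ge> 0" and "\<And>m. \<bar>A m - c * real m ^ 2\<bar> \<le> \<epsilon> * real m ^ 2 + K"
  shows "\<bar>\<Sum>k=1..N. a k * (A (N div k) - c * real (N div k) ^ 2)\<bar>
           \<le> \<epsilon> * (\<Sum>k=1..N. a k * real (N div k) ^ 2) + K * (\<Sum>k=1..N. a k)"
proof -
  have "\<bar>\<Sum>k=1..N. a k * (A (N div k) - c * real (N div k) ^ 2)\<bar>
      \<le> (\<Sum>k=1..N. a k * (\<epsilon> * real (N div k) ^ 2 + K))"
    using assms by (intro order.trans[OF sum_abs] sum_mono) (simp add: abs_mult mult_left_mono)
  also have "\<dots> = \<epsilon> * (\<Sum>k=1..N. a k * real (N div k) ^ 2) + K * (\<Sum>k=1..N. a k)"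
    by (simp add: algebra_simps sum.distrib sum_distrib_left sum_distrib_right)
  finally show ?thesis .
qed

lemma convolution_error_term_asymp:
  fixes a :: "nat \<Rightarrow> real"
  assumes nonneg: "\<And>k. a k \<ge> 0" and lim: "(\<lambda>n. (\<Sum>k=1..n. a k) / real n ^ 2) \<longlonglongrightarrow> c"
  shows "(\<lambda>N. (\<Sum>k=1..N. a k * ((\<Sum>j=1..N div k. a j) - c * real (N div k) ^ 2))
            / (real N ^ 2 * ln (real N))) \<longlonglongrightarrow> 0"
  unfolding tendsto_iff dist_real_def
proof (intro allI impI)
  fix r :: real assume "r > 0"
  define A where "A m = (\<Sum>j=1..m. a j)" for m
  define M where "M N = (\<Sum>k=1..N. a k * real (N div k) ^ 2)" for N
  define \<epsilon> where "\<epsilon> = r / (2 * \<bar>c\<bar> + 1)"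
  have "\<epsilon> > 0" using \<open>r > 0\<close> by (simp add: \<epsilon>_def)
  have "\<epsilon> * (2 * c) \<le> \<epsilon> * (2 * \<bar>c\<bar>)" using \<open>\<epsilon> > 0\<close> by (intro mult_left_mono) auto
  also have "\<dots> < \<epsilon> * (2 * \<bar>c\<bar> + 1)" using \<open>\<epsilon> > 0\<close> by simp
  also have "\<dots> = r" by (simp add: \<epsilon>_def)
  finally have "\<epsilon> * (2 * c) < r" .
  obtain K where K: "\<And>m. \<bar>A m - c * real m ^ 2\<bar> \<le> \<epsilon> * real m ^ 2 + K"
    using tendsto_ratio_imp_error_bound[OF lim \<open>\<epsilon> > 0\<close>] unfolding A_def by blast
  have "(\<lambda>N. M N / (real N ^ 2 * ln (real N))) \<longlonglongrightarrow> 2 * c"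
    unfolding M_def by (rule convolution_main_term_asymp[OF nonneg lim])
  moreover have "(\<lambda>N. A N / real N ^ 2) \<longlonglongrightarrow> c" using lim by (simp add: A_def)
  moreover have "(\<lambda>N. inverse (ln (real N))) \<longlonglongrightarrow> 0" by real_asymp
  ultimately have "(\<lambda>N. \<epsilon> * (M N / (real N ^ 2 * ln (real N))) + K * (A N / real N ^ 2) * inverse (ln (real N)))
      \<longlonglongrightarrow> \<epsilon> * (2 * c) + K * c * 0"
    by (intro tendsto_intros)
  then have "\<forall>\<^sub>F N in sequentially.
      \<epsilon> * (M N / (real N ^ 2 * ln (real N))) + K * (A N / real N ^ 2) * inverse (ln (real N)) < r"
    using \<open>\<epsilon> * (2 * c) < r\<close> by (intro order_tendstoD(2)) auto
  then show "\<forall>\<^sub>F N in sequentially. \<bar>(\<Sum>k=1..N. a k * ((\<Sum>j=1..N div k. a j) - c * real (N div k) ^ 2))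
      / (real N ^ 2 * ln (real N)) - 0\<bar> < r"
    using eventually_gt_at_top[of 1]
  proof eventually_elim
    case (elim N)
    then have pos: "real N ^ 2 * ln (real N) > 0" "real N > 0" "ln (real N) > 0" by simp_all
    have "\<bar>\<Sum>k=1..N. a k * (A (N div k) - c * real (N div k) ^ 2)\<bar> / (real N ^ 2 * ln (real N))
        \<le> (\<epsilon> * M N + K * A N) / (real N ^ 2 * ln (real N))"
      using convolution_error_le[OF nonneg K] pos
      by (intro divide_right_mono) (auto simp: M_def A_def)
    also have "\<dots> = \<epsilon> * (M N / (real N ^ 2 * ln (real N))) + K * (A N / real N ^ 2) * inverse (ln (real N))"
      using pos by (simp add: field_simps)
    finally show ?case using elim pos by (simp add: A_def)
  qed
qed

lemma hyperbolic_convolution_asymp: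
  fixes a :: "nat \<Rightarrow> real"
  assumes nonneg: "\<And>k. a k \<ge> 0" and lim: "(\<lambda>n. (\<Sum>k=1..n. a k) / real n ^ 2) \<longlonglongrightarrow> c"
  shows "(\<lambda>N. (\<Sum>k=1..N. a k * (\<Sum>j=1..N div k. a j)) / (real N ^ 2 * ln (real N))) \<longlonglongrightarrow> 2 * c^2"
proof -
  have split: "(\<Sum>k=1..N. a k * (\<Sum>j=1..N div k. a j))
      = c * (\<Sum>k=1..N. a k * real (N div k) ^ 2)
        + (\<Sum>k=1..N. a k * ((\<Sum>j=1..N div k. a j) - c * real (N div k) ^ 2))" for N
    by (simp add: right_diff_distrib sum_subtractf sum_distrib_left mult_ac)
  have eq: "(\<lambda>N. (\<Sum>k=1..N. a k * (\<Sum>j=1..N div k. a j)) / (real N ^ 2 * ln (real N)))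
      = (\<lambda>N. c * ((\<Sum>k=1..N. a k * real (N div k) ^ 2) / (real N ^ 2 * ln (real N)))
       + (\<Sum>k=1..N. a k * ((\<Sum>j=1..N div k. a j) - c * real (N div k) ^ 2)) / (real N ^ 2 * ln (real N)))"
    unfolding split by (simp add: add_divide_distrib)
  have "(\<lambda>N. (\<Sum>k=1..N. a k * (\<Sum>j=1..N div k. a j)) / (real N ^ 2 * ln (real N)))
      \<longlonglongrightarrow> c * (2 * c) + 0"
    unfolding eq
    by (intro tendsto_intros convolution_main_term_asymp convolution_error_term_asymp nonneg lim)
  then show ?thesis by (simp add: power2_eq_square mult.left_commute)
qed

lemma card_height_le_eq_sum:
  fixes f :: "'a \<Rightarrow> nat"
  assumes pos: "\<And>x. x \<in> S \<Longrightarrow> f x \<ge> 1" and fin: "\<And>n. finite {x\<in>S. f x \<le> n}"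
  shows "card {x\<in>S. f x \<le> n} = (\<Sum>k=1..n. card {x\<in>S. f x = k})"
proof -
  have "{x\<in>S. f x \<le> n} = (\<Union>k\<in>{1..n}. {x\<in>S. f x = k})" using pos by force
  moreover have "finite {x\<in>S. f x = k}" if "k \<in> {1..n}" for k
    by (rule finite_subset[OF _ fin[of n]]) (use that in auto)
  ultimately show ?thesis by (simp only:) (intro card_UN_disjoint; auto)
qed

lemma card_height_product_le:
  fixes f :: "'a \<Rightarrow> nat"
  assumes pos: "\<And>x. x \<in> S \<Longrightarrow> f x \<ge> 1" and fin: "\<And>n. finite {x\<in>S. f x \<le> n}"
  shows "card {(x,y). x\<in>S \<and> y\<in>S \<and> f x * f y \<le> N} =
           (\<Sum>k=1..N. card {x\<in>S. f x = k} * card {y\<in>S. f y \<le> N div k})"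
proof -
  have "{(x,y). x\<in>S \<and> y\<in>S \<and> f x * f y \<le> N} =
        (\<Union>k\<in>{1..N}. {x\<in>S. f x = k} \<times> {y\<in>S. f y \<le> N div k})"
  proof (intro equalityI subsetI)
    fix p assume "p \<in> {(x,y). x\<in>S \<and> y\<in>S \<and> f x * f y \<le> N}"
    then obtain x y where p: "p = (x,y)" "x \<in> S" "y \<in> S" "f x * f y \<le> N" by auto
    with pos have "f x \<ge> 1" "f y \<ge> 1" by auto
    with p(4) have "f x \<le> N" "f y \<le> N div f x"
      by (auto simp: less_eq_div_iff_mult_less_eq mult.commute intro: order_trans[OF _ p(4)])
    with p \<open>f x \<ge> 1\<close> show "p \<in> (\<Union>k\<in>{1..N}. {x\<in>S. f x = k} \<times> {y\<in>S. f y \<le> N div k})"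
      by auto
  next
    fix p assume "p \<in> (\<Union>k\<in>{1..N}. {x\<in>S. f x = k} \<times> {y\<in>S. f y \<le> N div k})"
    then show "p \<in> {(x,y). x\<in>S \<and> y\<in>S \<and> f x * f y \<le> N}"
      by (auto simp: less_eq_div_iff_mult_less_eq mult.commute)
  qed
  moreover have "finite ({x\<in>S. f x = k} \<times> {y\<in>S. f y \<le> N div k})" for k
    using finite_subset[OF _ fin[of k], of "{x\<in>S. f x = k}"] fin by auto
  ultimately show ?thesis
    by (simp only:) (subst card_UN_disjoint; auto simp: card_cartesian_product)
qed

lemma nat_floor_square_ln_asymp_equiv:
  "(\<lambda>B. real (nat \<lfloor>B\<rfloor>) ^ 2 * ln (real (nat \<lfloor>B\<rfloor>))) \<sim>[at_top] (\<lambda>B::real. B ^ 2 * ln B)"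
proof (rule asymp_equiv_sandwich_real)
  show "(\<lambda>B::real. (B - 1) ^ 2 * ln (B - 1)) \<sim>[at_top] (\<lambda>B. B ^ 2 * ln B)" by real_asymp
  show "\<forall>\<^sub>F B in at_top. real (nat \<lfloor>B\<rfloor>) ^ 2 * ln (real (nat \<lfloor>B\<rfloor>))
      \<in> {(B - 1) ^ 2 * ln (B - 1)..B ^ 2 * ln B}"
    using eventually_ge_at_top[of "2::real"]
  proof eventually_elim
    case (elim B)
    then have "B - 1 \<le> real (nat \<lfloor>B\<rfloor>)" "real (nat \<lfloor>B\<rfloor>) \<le> B" "B - 1 \<ge> 1" by linarith+
    then show ?case
      by (auto intro!: mult_mono power_mono)
  qed
qed simp

lemma card_pairs_height_product_asymp:
  fixes S :: "'a set" and f :: "'a \<Rightarrow> nat"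
  assumes pos: "\<And>x. x \<in> S \<Longrightarrow> f x \<ge> 1" and fin: "\<And>n. finite {x\<in>S. f x \<le> n}"
    and lim: "(\<lambda>n. real (card {x\<in>S. f x \<le> n}) / real n ^ 2) \<longlonglongrightarrow> c" and "c > 0"
  shows "(\<lambda>B. real (card {(x,y). x\<in>S \<and> y\<in>S \<and> real (f x) * real (f y) \<le> B}))
           \<sim>[at_top] (\<lambda>B. 2 * c^2 * B^2 * ln B)"
proof -
  define a where "a k = real (card {x\<in>S. f x = k})" for k
  define T where "T N = (\<Sum>k=1..N. a k * (\<Sum>j=1..N div k. a j))" for N
  have count: "real (card {(x,y). x\<in>S \<and> y\<in>S \<and> real (f x) * real (f y) \<le> B}) = T (nat \<lfloor>B\<rfloor>)"
    if "B \<ge> 0" for B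
  proof -
    have "{(x,y). x\<in>S \<and> y\<in>S \<and> real (f x) * real (f y) \<le> B}
        = {(x,y). x\<in>S \<and> y\<in>S \<and> f x * f y \<le> nat \<lfloor>B\<rfloor>}"
      using that by (simp flip: of_nat_mult add: le_nat_iff le_floor_iff)
    then show ?thesis
      by (simp add: card_height_product_le[OF pos fin] card_height_le_eq_sum[OF pos fin] T_def a_def)
  qed
  have "(\<lambda>n. (\<Sum>k=1..n. a k) / real n ^ 2) \<longlonglongrightarrow> c"
    using lim by (simp add: a_def card_height_le_eq_sum[OF pos fin])
  then have "(\<lambda>N. T N / (real N ^ 2 * ln (real N))) \<longlonglongrightarrow> 2 * c^2"
    unfolding T_def by (rule hyperbolic_convolution_asymp[rotated]) (simp add: a_def)
  then have "T \<sim>[sequentially] (\<lambda>N. 2 * c^2 * (real N ^ 2 * ln (real N)))"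
    by (rule asymp_equivI'_const) (use \<open>c > 0\<close> in simp)
  then have "(\<lambda>B. T (nat \<lfloor>B\<rfloor>))
      \<sim>[at_top] (\<lambda>B. 2 * c^2 * (real (nat \<lfloor>B\<rfloor>) ^ 2 * ln (real (nat \<lfloor>B\<rfloor>))))"
    by (rule asymp_equiv_compose')
      (rule filterlim_compose[OF filterlim_nat_sequentially filterlim_floor_sequentially])
  moreover have "\<dots> \<sim>[at_top] (\<lambda>B. 2 * c^2 * (B ^ 2 * ln B))"
    by (intro asymp_equiv_intros nat_floor_square_ln_asymp_equiv)
  ultimately have "(\<lambda>B. T (nat \<lfloor>B\<rfloor>)) \<sim>[at_top] (\<lambda>B. 2 * c^2 * (B ^ 2 * ln B))"
    by (rule asymp_equiv_trans)
  moreover have "\<forall>\<^sub>F B in at_top.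
      T (nat \<lfloor>B\<rfloor>) = real (card {(x,y). x\<in>S \<and> y\<in>S \<and> real (f x) * real (f y) \<le> B})"
    using eventually_ge_at_top[of "0::real"] by eventually_elim (simp add: count)
  ultimately show ?thesis
    by (rule asymp_equiv_transfer) (simp add: mult_ac)
qed

section \<open>The density of coprime pairs in a box\<close>

lemma tendsto_sum_lessThan_dominated:
  fixes x :: "nat \<Rightarrow> nat \<Rightarrow> real"
  assumes lim: "\<And>d. (\<lambda>n. x d n) \<longlonglongrightarrow> b d"
    and bound: "\<And>d n. \<bar>x d n\<bar> \<le> M d" and "summable M"
  shows "(\<lambda>n. \<Sum>d<n. x d n) \<longlonglongrightarrow> (\<Sum>d. b d)"
proof -
  define y where "y d n = (if d < n then x d n else 0)" for d n
  have "(\<lambda>n. y d n) \<longlonglongrightarrow> b d" for d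
  proof -
    have "\<forall>\<^sub>F n in sequentially. x d n = y d n"
      using eventually_gt_at_top[of d] by eventually_elim (simp add: y_def)
    from tendsto_cong[OF this] lim[of d] show ?thesis by simp
  qed
  moreover have "\<forall>\<^sub>F (d, n) in sequentially \<times>\<^sub>F sequentially. norm (y d n) \<le> M d"
    using bound order_trans[OF abs_ge_zero bound] by (intro always_eventually) (auto simp: y_def)
  ultimately have "(\<lambda>n. \<Sum>d. y d n) \<longlonglongrightarrow> (\<Sum>d. b d)"
    using tannerys_theorem[of y b sequentially M] \<open>summable M\<close> by simp
  moreover have "(\<Sum>d. y d n) = (\<Sum>d<n. x d n)" for n
    by (subst suminf_finite[of "{..<n}"]) (auto simp: y_def)
  ultimately show ?thesis by simp
qed

lemma div_nat_over_le: "real (n div m) / real n \<le> 1 / real m"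
proof (cases "n = 0")
  case False
  then have "real (n div m) / real n \<le> real n / real m / real n"
    by (intro divide_right_mono of_nat_div_le_of_nat) auto
  with False show ?thesis by simp
qed simp

lemma div_nat_over_mult_le:
  assumes "r > 0"
  shows "real (n div (r * m)) / real n \<le> 1 / real m"
proof -
  have "m \<le> r * m" using assms by simp
  then have "real m \<le> real (r * m)" by (simp only: of_nat_le_iff)
  then have "1 / real (r * m) \<le> 1 / real m" by (cases "m = 0") (auto intro: divide_left_mono)
  then show ?thesis using div_nat_over_le[of n "r * m"] by linarith
qed

lemma tendsto_div_nat_over: "m > 0 \<Longrightarrow> (\<lambda>n. real (n div m) / real n) \<longlonglongrightarrow> 1 / real m"
proof (rule tendsto_sandwich[of "\<lambda>n. 1 / real m - 1 / real n" _ _ "\<lambda>n. 1 / real m"])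
  show "\<forall>\<^sub>F n in sequentially. 1 / real m - 1 / real n \<le> real (n div m) / real n"
    using eventually_gt_at_top[of 0]
  proof eventually_elim
    case (elim n)
    have "1 / real m - 1 / real n = (real n / real m - 1) / real n" using elim by (simp add: field_simps)
    also have "\<dots> \<le> real (n div m) / real n" by (intro divide_right_mono real_div_nat_ge) simp
    finally show ?case .
  qed
  show "\<forall>\<^sub>F n in sequentially. real (n div m) / real n \<le> 1 / real m"
    by (simp add: div_nat_over_le)
qed (real_asymp, simp)

lemma zeta2_eq: "zeta2 = pi\<^sup>2 / 6"
  unfolding zeta2_def using inverse_squares_sums by (simp add: sums_iff add.commute)

lemma summable_inverse_Suc_square: "summable (\<lambda>d. 1 / real (Suc d) ^ 2)"
  using sums_summable[OF inverse_squares_sums] by (simp add: add.commute)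

lemma zeta2_pos: "zeta2 > 0"
  by (simp add: zeta2_eq)

definition moebius_mu :: "nat \<Rightarrow> int" where
  "moebius_mu n = (if squarefree n then (-1) ^ card (prime_factors n) else 0)"

lemma abs_moebius_mu_le: "\<bar>real_of_int (moebius_mu n)\<bar> \<le> 1"
  by (simp add: moebius_mu_def)

lemma moebius_mu_prime_mult:
  assumes p: "prime (p::nat)"
  shows "moebius_mu (p * e) = (if p dvd e then 0 else - moebius_mu e)"
proof (cases "p dvd e")
  case True
  then have "p^2 dvd p * e" by (simp add: power2_eq_square)
  then have "\<not> squarefree (p * e)" using p by (intro not_squarefreeI) auto
  with True show ?thesis by (simp add: moebius_mu_def)
next
  case False
  show ?thesis
  proof (cases "e = 0")
    case e: False
    have cop: "coprime p e" using p False by (rule prime_imp_coprime)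
    have "squarefree (p * e) \<longleftrightarrow> squarefree e"
      using squarefree_mult_coprime[OF cop squarefree_prime[OF p]] squarefree_multD(2) by blast
    moreover have "prime_factors (p * e) = insert p (prime_factors e)"
      using p e by (simp add: prime_factors_product prime_prime_factors)
    moreover have "p \<notin> prime_factors e" using False by (auto simp: in_prime_factors_iff)
    ultimately show ?thesis using False by (simp add: moebius_mu_def)
  qed (simp add: moebius_mu_def)
qed

lemma sum_moebius_mu_divisors:
  assumes "n > (0::nat)"
  shows "(\<Sum>d | d dvd n. moebius_mu d) = (if n = 1 then 1 else 0)"
proof (cases "n = 1")
  case True
  then have "{d. d dvd n} = {1}" by auto
  with True show ?thesis by (simp add: moebius_mu_def)
next
  case False
  with assms obtain p where p: "prime p" "p dvd n" using prime_factor_nat[of n] by auto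
  define m where "m = n div p"
  have n: "n = p * m" using p by (simp add: m_def)
  with assms have "m > 0" by (cases m) auto
  have coprime_divisors: "{d. d dvd n \<and> \<not> p dvd d} = {d. d dvd m \<and> \<not> p dvd d}"
    using p prime_imp_coprime[of p] by (auto simp: n coprime_commute coprime_dvd_mult_right_iff)
  have multiples: "{d. d dvd n \<and> p dvd d} = (\<lambda>d. p * d) ` {d. d dvd m}"
    using p by (auto simp: n prime_gt_0_nat)
  have "(\<Sum>d | d dvd n. moebius_mu d)
      = (\<Sum>d | d dvd n \<and> \<not> p dvd d. moebius_mu d) + (\<Sum>d | d dvd n \<and> p dvd d. moebius_mu d)"
    using assms by (subst sum.union_disjoint[symmetric]) (auto intro: sum.cong)
  also have "(\<Sum>d | d dvd n \<and> p dvd d. moebius_mu d) = (\<Sum>d | d dvd m. moebius_mu (p * d))"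
    unfolding multiples using p by (subst sum.reindex) (auto simp: inj_on_def prime_gt_0_nat)
  also have "\<dots> = (\<Sum>d | d dvd m. if \<not> p dvd d then - moebius_mu d else 0)"
    using p by (intro sum.cong) (auto simp: moebius_mu_prime_mult)
  also have "\<dots> = (\<Sum>d | d dvd m \<and> \<not> p dvd d. - moebius_mu d)"
    using \<open>m > 0\<close> sum.inter_filter[of "{d. d dvd m}" "\<lambda>d. - moebius_mu d" "\<lambda>d. \<not> p dvd d"]
    by simp
  finally show ?thesis using False by (simp add: coprime_divisors sum_negf)
qed

definition coprime_count :: "nat \<Rightarrow> nat \<Rightarrow> nat" where
  "coprime_count X Y = card {(g,u). g \<in> {1..X} \<and> u \<in> {1..Y} \<and> coprime g u}"

lemma coprime_count_le: "coprime_count X Y \<le> X * Y"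
proof -
  have "coprime_count X Y \<le> card ({1..X} \<times> {1..Y})"
    unfolding coprime_count_def by (intro card_mono) auto
  then show ?thesis by (simp add: card_cartesian_product)
qed

lemma card_multiples_atLeastAtMost:
  assumes "d > (0::nat)"
  shows "card {g \<in> {1..X}. d dvd g} = X div d"
proof -
  have "{g \<in> {1..X}. d dvd g} = (\<lambda>j. d * j) ` {1..X div d}"
    using assms by (auto simp: less_eq_div_iff_mult_less_eq mult.commute intro!: imageI)
  moreover have "inj_on (\<lambda>j. d * j) {1..X div d}" using assms by (auto simp: inj_on_def)
  ultimately show ?thesis by (simp add: card_image)
qed

lemma coprime_count_moebius:
  "int (coprime_count X Y) = (\<Sum>d=1..X. moebius_mu d * int (X div d) * int (Y div d))"
proof -
  define R where "R = {1..X} \<times> {1..Y}"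
  have "finite R" by (simp add: R_def)
  have "{(g,u). g \<in> {1..X} \<and> u \<in> {1..Y} \<and> coprime g u} = R \<inter> {x. coprime (fst x) (snd x)}"
    by (auto simp: R_def)
  then have "int (coprime_count X Y) = (\<Sum>x\<in>R. if coprime (fst x) (snd x) then 1 else 0)"
    using \<open>finite R\<close> by (simp add: coprime_count_def sum.If_cases)
  also have "\<dots> = (\<Sum>x\<in>R. \<Sum>d \<in> {d \<in> {1..X}. d dvd gcd (fst x) (snd x)}. moebius_mu d)"
  proof (intro sum.cong refl)
    fix x assume x: "x \<in> R"
    define g where "g = gcd (fst x) (snd x)"
    have "g > 0" "g \<le> X" using x by (auto simp: R_def g_def intro: order.trans[OF dvd_imp_le[OF gcd_dvd1]])
    then have "{d \<in> {1..X}. d dvd g} = {d. d dvd g}"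
      by (auto dest: dvd_imp_le simp: dvd_pos_nat intro: Suc_leI)
    then show "(if coprime (fst x) (snd x) then 1 else 0)
        = (\<Sum>d \<in> {d \<in> {1..X}. d dvd gcd (fst x) (snd x)}. moebius_mu d)"
      using sum_moebius_mu_divisors[OF \<open>g > 0\<close>] by (simp add: g_def coprime_iff_gcd_eq_1)
  qed
  also have "\<dots> = (\<Sum>d\<in>{1..X}. \<Sum>x | x \<in> R \<and> d dvd gcd (fst x) (snd x). moebius_mu d)"
    by (rule sum.swap_restrict) (auto simp: R_def)
  also have "\<dots> = (\<Sum>d=1..X. moebius_mu d * int (X div d) * int (Y div d))"
  proof (intro sum.cong refl)
    fix d assume d: "d \<in> {1..X}"
    have "{x. x \<in> R \<and> d dvd gcd (fst x) (snd x)} = {g \<in> {1..X}. d dvd g} \<times> {u \<in> {1..Y}. d dvd u}"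
      by (auto simp: R_def)
    moreover have "d > 0" using d by simp
    ultimately have "card {x. x \<in> R \<and> d dvd gcd (fst x) (snd x)} = (X div d) * (Y div d)"
      by (simp only: card_cartesian_product card_multiples_atLeastAtMost)
    then show "(\<Sum>x | x \<in> R \<and> d dvd gcd (fst x) (snd x). moebius_mu d)
        = moebius_mu d * int (X div d) * int (Y div d)"
      by simp
  qed
  finally show ?thesis .
qed

lemma card_gcd_eq:
  assumes "d > 0"
  shows "card {x \<in> {1..X} \<times> {1..Y}. gcd (fst x) (snd x) = d} = coprime_count (X div d) (Y div d)"
proof -
  define D where "D = {(g,u). g \<in> {1..X div d} \<and> u \<in> {1..Y div d} \<and> coprime g u}"
  have "{x \<in> {1..X} \<times> {1..Y}. gcd (fst x) (snd x) = d} = (\<lambda>(g,u). (d * g, d * u)) ` D"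
  proof (intro equalityI subsetI)
    fix x assume x: "x \<in> {x \<in> {1..X} \<times> {1..Y}. gcd (fst x) (snd x) = d}"
    obtain g u where gu: "x = (d * g, d * u)" "gcd (d * g) (d * u) = d"
      using x by (auto elim!: dvdE[OF gcd_dvd1] dvdE[OF gcd_dvd2])
        (metis gcd_dvd1 gcd_dvd2 dvdE)
    then have "coprime g u"
      using \<open>d > 0\<close> gcd_mult_distrib_nat[of d g u] by (simp add: coprime_iff_gcd_eq_1)
    moreover have "g \<in> {1..X div d}" "u \<in> {1..Y div d}"
      using x gu \<open>d > 0\<close> by (auto simp: less_eq_div_iff_mult_less_eq mult.commute Suc_le_eq)
    ultimately show "x \<in> (\<lambda>(g,u). (d * g, d * u)) ` D" using gu by (auto simp: D_def)
  next
    fix x assume "x \<in> (\<lambda>(g,u). (d * g, d * u)) ` D"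
    then obtain g u where "x = (d * g, d * u)" "g \<in> {1..X div d}" "u \<in> {1..Y div d}" "coprime g u"
      by (auto simp: D_def)
    then show "x \<in> {x \<in> {1..X} \<times> {1..Y}. gcd (fst x) (snd x) = d}"
      using \<open>d > 0\<close> gcd_mult_distrib_nat[of d g u]
      by (auto simp: less_eq_div_iff_mult_less_eq mult.commute coprime_iff_gcd_eq_1)
  qed
  moreover have "inj_on (\<lambda>(g,u). (d * g, d * u)) D" using \<open>d > 0\<close> by (auto simp: inj_on_def)
  ultimately show ?thesis by (simp add: card_image D_def coprime_count_def)
qed

lemma sum_coprime_count_div: "X * Y = (\<Sum>d=1..X. coprime_count (X div d) (Y div d))"
proof -
  define R where "R = {1..X} \<times> {1..Y}"
  have "R = (\<Union>d\<in>{1..X}. {x \<in> R. gcd (fst x) (snd x) = d})"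
  proof (intro equalityI subsetI)
    fix x assume x: "x \<in> R"
    then have "gcd (fst x) (snd x) \<in> {1..X}"
      by (auto simp: R_def Suc_le_eq intro: order.trans[OF dvd_imp_le[OF gcd_dvd1]])
    with x show "x \<in> (\<Union>d\<in>{1..X}. {x \<in> R. gcd (fst x) (snd x) = d})" by auto
  qed auto
  then have "card R = card (\<Union>d\<in>{1..X}. {x \<in> R. gcd (fst x) (snd x) = d})" by (rule arg_cong)
  also have "\<dots> = (\<Sum>d=1..X. card {x \<in> R. gcd (fst x) (snd x) = d})"
    by (rule card_UN_disjoint) (auto simp: R_def)
  finally have "X * Y = (\<Sum>d=1..X. card {x \<in> R. gcd (fst x) (snd x) = d})"
    by (simp add: R_def card_cartesian_product)
  also have "\<dots> = (\<Sum>d=1..X. coprime_count (X div d) (Y div d))"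
    unfolding R_def by (intro sum.cong refl card_gcd_eq) auto
  finally show ?thesis .
qed

lemma tendsto_coprime_count_moebius:
  assumes "p > 0" "q > 0"
  shows "(\<lambda>n. real (coprime_count (n div p) (n div q)) / real n ^ 2)
           \<longlonglongrightarrow> (\<Sum>d. moebius_mu (Suc d) / real (Suc d) ^ 2) / (real p * real q)"
proof -
  define x where "x d n = moebius_mu (Suc d) * (real (n div p div Suc d) / real n)
                                          * (real (n div q div Suc d) / real n)" for d n
  have "real (coprime_count (n div p) (n div q))
      = (\<Sum>d=1..n div p. moebius_mu d * real (n div p div d) * real (n div q div d))" for n
    using arg_cong[OF coprime_count_moebius, of real_of_int] by simp
  also have "(\<Sum>d=1..n div p. moebius_mu d * real (n div p div d) * real (n div q div d))
      = (\<Sum>d=1..n. moebius_mu d * real (n div p div d) * real (n div q div d))" for n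
    by (intro sum.mono_neutral_left) auto
  finally have "real (coprime_count (n div p) (n div q)) / real n ^ 2 = (\<Sum>d<n. x d n)" for n
    by (simp add: sum.atLeast1_atMost_eq sum_divide_distrib x_def power2_eq_square)
  moreover have "(\<lambda>n. \<Sum>d<n. x d n)
      \<longlonglongrightarrow> (\<Sum>d. moebius_mu (Suc d) * (1 / real (p * Suc d)) * (1 / real (q * Suc d)))"
  proof (rule tendsto_sum_lessThan_dominated[OF _ _ summable_inverse_Suc_square])
    show "(\<lambda>n. x d n) \<longlonglongrightarrow> moebius_mu (Suc d) * (1 / real (p * Suc d)) * (1 / real (q * Suc d))" for d
      unfolding x_def div_mult2_eq[symmetric] using assms by (intro tendsto_intros tendsto_div_nat_over) auto
    show "\<bar>x d n\<bar> \<le> 1 / real (Suc d) ^ 2" for d n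
    proof -
      have "\<bar>x d n\<bar> \<le> 1 * (1 / real (Suc d)) * (1 / real (Suc d))"
        unfolding x_def abs_mult div_mult2_eq[symmetric]
        using assms abs_moebius_mu_le[of "Suc d"] div_nat_over_mult_le[of p n "Suc d"]
          div_nat_over_mult_le[of q n "Suc d"]
        by (intro mult_mono) auto
      then show ?thesis by (simp add: power2_eq_square)
    qed
  qed
  moreover have "summable (\<lambda>d. moebius_mu (Suc d) / real (Suc d) ^ 2)"
    using abs_moebius_mu_le
    by (intro summable_comparison_test'[OF summable_inverse_Suc_square])
      (simp add: divide_right_mono)
  then have "(\<Sum>d. moebius_mu (Suc d) * (1 / real (p * Suc d)) * (1 / real (q * Suc d)))
      = (\<Sum>d. moebius_mu (Suc d) / real (Suc d) ^ 2) / (real p * real q)"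
    by (subst suminf_divide[symmetric]) (auto intro!: suminf_cong simp: field_simps power2_eq_square)
  ultimately show ?thesis by simp
qed

lemma moebius_inverse_square_sum: "(\<Sum>d. moebius_mu (Suc d) / real (Suc d) ^ 2) * zeta2 = 1"
proof -
  define \<kappa> where "\<kappa> = (\<Sum>d. moebius_mu (Suc d) / real (Suc d) ^ 2)"
  define x where "x d n = real (coprime_count (n div Suc d) (n div Suc d)) / real n ^ 2" for d n
  have "(\<lambda>n. \<Sum>d<n. x d n) \<longlonglongrightarrow> (\<Sum>d. \<kappa> * (1 / real (Suc d) ^ 2))"
  proof (rule tendsto_sum_lessThan_dominated[OF _ _ summable_inverse_Suc_square])
    show "(\<lambda>n. x d n) \<longlonglongrightarrow> \<kappa> * (1 / real (Suc d) ^ 2)" for d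
      using tendsto_coprime_count_moebius[of "Suc d" "Suc d"]
      by (simp add: x_def \<kappa>_def power2_eq_square)
    show "\<bar>x d n\<bar> \<le> 1 / real (Suc d) ^ 2" for d n
    proof -
      have "\<bar>x d n\<bar> = x d n" by (simp add: x_def)
      also have "\<dots> \<le> real (n div Suc d * (n div Suc d)) / real n ^ 2"
        unfolding x_def
        by (intro divide_right_mono) (simp_all only: of_nat_le_iff coprime_count_le zero_le_power2)
      also have "\<dots> = (real (n div Suc d) / real n) ^ 2" by (simp add: power2_eq_square)
      also have "\<dots> \<le> (1 / real (Suc d)) ^ 2" by (intro power_mono div_nat_over_le) simp
      finally show ?thesis by (simp add: power_divide)
    qed
  qed
  \<comment> \<open>grouping the pairs in the box by their gcd, the partial sums are identically 1\<close>
  moreover have "(\<Sum>d<n. x d n) = 1" if "n > 0" for n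
  proof -
    have "(\<Sum>d<n. x d n) = real (\<Sum>d<n. coprime_count (n div Suc d) (n div Suc d)) / real n ^ 2"
      by (simp add: x_def sum_divide_distrib)
    also have "(\<Sum>d<n. coprime_count (n div Suc d) (n div Suc d)) = n * n"
      using sum_coprime_count_div[of n n] by (simp add: sum.atLeast1_atMost_eq)
    finally show ?thesis using that by (simp add: power2_eq_square)
  qed
  then have "(\<lambda>n. \<Sum>d<n. x d n) \<longlonglongrightarrow> 1"
    by (intro tendsto_eventually) (auto intro: eventually_mono[OF eventually_gt_at_top[of 0]])
  moreover have "(\<Sum>d. \<kappa> * (1 / real (Suc d) ^ 2)) = \<kappa> * zeta2"
    unfolding zeta2_def by (rule suminf_mult[OF summable_inverse_Suc_square])
  ultimately show ?thesis using LIMSEQ_unique unfolding \<kappa>_def by metis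
qed

lemma tendsto_coprime_count:
  assumes "p > 0" "q > 0"
  shows "(\<lambda>n. real (coprime_count (n div p) (n div q)) / real n ^ 2) \<longlonglongrightarrow> 1 / (zeta2 * real p * real q)"
proof -
  have "(\<Sum>d. moebius_mu (Suc d) / real (Suc d) ^ 2) = 1 / zeta2"
    using moebius_inverse_square_sum zeta2_pos by (simp add: field_simps)
  then show ?thesis using tendsto_coprime_count_moebius[OF assms] by (simp add: mult.assoc)
qed

section \<open>Primitive pairs of integers\<close>

definition pair_height :: "int \<times> int \<Rightarrow> int" where
  "pair_height x = max \<bar>fst x\<bar> \<bar>snd x\<bar>"

definition prim_pairs_of_height :: "nat \<Rightarrow> (int \<times> int) set" where
  "prim_pairs_of_height k = {x. coprime (fst x) (snd x) \<and> pair_height x = int k}"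

definition prim_pairs_upto :: "nat \<Rightarrow> (int \<times> int) set" where
  "prim_pairs_upto n = {x. coprime (fst x) (snd x) \<and> pair_height x \<le> int n}"

definition prim_count :: "nat \<Rightarrow> nat" where
  "prim_count k = card (prim_pairs_of_height k)"

lemma pair_height_ge_1: "coprime (fst x) (snd x) \<Longrightarrow> pair_height x \<ge> 1"
  by (cases "fst x = 0") (auto simp: pair_height_def)

lemma finite_prim_pairs_upto: "finite (prim_pairs_upto n)"
  by (rule finite_subset[of _ "{-int n..int n} \<times> {-int n..int n}"])
    (auto simp: prim_pairs_upto_def pair_height_def)

lemma finite_prim_pairs_of_height: "finite (prim_pairs_of_height k)"
  by (rule finite_subset[OF _ finite_prim_pairs_upto[of k]])
    (auto simp: prim_pairs_of_height_def prim_pairs_upto_def)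

lemma card_prim_pairs_upto_sum: "card (prim_pairs_upto n) = (\<Sum>k=1..n. prim_count k)"
proof -
  have "prim_pairs_upto n = (\<Union>k\<in>{1..n}. prim_pairs_of_height k)"
  proof (intro equalityI subsetI)
    fix x assume x: "x \<in> prim_pairs_upto n"
    then have "pair_height x \<ge> 1" by (auto simp: prim_pairs_upto_def pair_height_ge_1)
    with x show "x \<in> (\<Union>k\<in>{1..n}. prim_pairs_of_height k)"
      by (auto simp: prim_pairs_upto_def prim_pairs_of_height_def intro!: bexI[of _ "nat (pair_height x)"])
  qed (auto simp: prim_pairs_upto_def prim_pairs_of_height_def)
  then show ?thesis unfolding prim_count_def
    by (simp only:) (rule card_UN_disjoint, simp_all add: finite_prim_pairs_of_height,
        auto simp: prim_pairs_of_height_def)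
qed

lemma prim_count_0: "prim_count 0 = 0"
proof -
  have "prim_pairs_of_height 0 = {}"
    using pair_height_ge_1 by (force simp: prim_pairs_of_height_def)
  then show ?thesis by (simp add: prim_count_def)
qed

lemma prim_count_le: "prim_count k \<le> 8 * k + 4"
proof -
  define I where "I = {-int k..int k}"
  define E where "E = {-int k, int k}"
  have "prim_count k \<le> card (I \<times> E \<union> E \<times> I)"
    unfolding prim_count_def
    by (intro card_mono)
      (auto simp: I_def E_def prim_pairs_of_height_def pair_height_def max_def split: if_splits)
  also have "\<dots> \<le> card (I \<times> E) + card (E \<times> I)" by (rule card_Un_le)
  also have "\<dots> \<le> (2 * k + 1) * 2 + 2 * (2 * k + 1)"
  proof -
    have "card I = 2 * k + 1" "card E \<le> 2" by (simp_all add: I_def E_def card_insert_if)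
    then have "card I * card E \<le> (2 * k + 1) * 2" "card E * card I \<le> 2 * (2 * k + 1)"
      by (metis mult_le_mono2, metis mult_le_mono1)
    then show ?thesis by (simp only: card_cartesian_product add_mono)
  qed
  finally show ?thesis by simp
qed

definition coprime_box :: "int \<Rightarrow> int \<Rightarrow> nat \<Rightarrow> nat \<Rightarrow> (int \<times> int) set" where
  "coprime_box s t X Y = {x. coprime (fst x) (snd x) \<and> 1 \<le> s * fst x \<and> s * fst x \<le> int X
                                                   \<and> 1 \<le> t * snd x \<and> t * snd x \<le> int Y}"

lemma coprime_sign_mult_iff:
  "s \<in> {1, -1} \<Longrightarrow> t \<in> {1, -1} \<Longrightarrow> coprime (s * a) (t * b) \<longleftrightarrow> coprime a (b::int)"
  by auto

lemma coprime_box_eq_image: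
  assumes st: "s \<in> {1, -1}" "t \<in> {1, -1}"
  shows "coprime_box s t X Y
           = (\<lambda>(g,u). (s * int g, t * int u)) ` {(g,u). g \<in> {1..X} \<and> u \<in> {1..Y} \<and> coprime g u}"
proof (intro equalityI subsetI)
  have ss: "s * (s * a) = a" "t * (t * a) = a" for a using st by auto
  fix x assume x: "x \<in> coprime_box s t X Y"
  define g where "g = nat (s * fst x)"
  define u where "u = nat (t * snd x)"
  have gu: "int g = s * fst x" "int u = t * snd x" "g \<in> {1..X}" "u \<in> {1..Y}"
    using x by (auto simp: coprime_box_def g_def u_def)
  have "coprime g u"
    using x coprime_sign_mult_iff[OF st, of "fst x" "snd x"]
    unfolding coprime_box_def gu(1,2)[symmetric] by simp
  moreover have "x = (s * int g, t * int u)" by (simp add: gu(1,2) ss)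
  ultimately show "x \<in> (\<lambda>(g,u). (s * int g, t * int u)) ` {(g,u). g \<in> {1..X} \<and> u \<in> {1..Y} \<and> coprime g u}"
    using gu(3,4) by (intro rev_image_eqI[of "(g,u)"]) auto
next
  have ss: "s * (s * a) = a" "t * (t * a) = a" for a using st by auto
  fix x assume "x \<in> (\<lambda>(g,u). (s * int g, t * int u)) ` {(g,u). g \<in> {1..X} \<and> u \<in> {1..Y} \<and> coprime g u}"
  then obtain g u where "x = (s * int g, t * int u)" "g \<in> {1..X}" "u \<in> {1..Y}" "coprime g u"
    by auto
  then show "x \<in> coprime_box s t X Y"
    using coprime_sign_mult_iff[OF st, of "int g" "int u"] unfolding coprime_box_def by (simp add: ss)
qed

lemma
  assumes "s \<in> {1, -1}" "t \<in> {1, -1}"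
  shows card_coprime_box: "card (coprime_box s t X Y) = coprime_count X Y"
    and finite_coprime_box: "finite (coprime_box s t X Y)"
proof -
  have "s \<noteq> 0" "t \<noteq> 0" using assms by auto
  then have "inj_on (\<lambda>(g,u). (s * int g, t * int u)) A" for A by (auto simp: inj_on_def)
  then show "card (coprime_box s t X Y) = coprime_count X Y"
    unfolding coprime_box_eq_image[OF assms] coprime_count_def by (rule card_image)
  show "finite (coprime_box s t X Y)"
    unfolding coprime_box_eq_image[OF assms]
    by (rule finite_imageI, rule finite_subset[of _ "{1..X} \<times> {1..Y}"]) auto
qed

lemma prim_pairs_upto_eq:
  assumes "n \<ge> 1"
  shows "prim_pairs_upto n = {(0,1), (0,-1), (1,0), (-1,0)}
           \<union> (\<Union>st\<in>{1, -1} \<times> {1, -1}. coprime_box (fst st) (snd st) n n)"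
proof (intro equalityI subsetI)
  fix x assume x: "x \<in> prim_pairs_upto n"
  obtain a b where ab: "x = (a, b)" by (cases x)
  have c: "coprime a b" "\<bar>a\<bar> \<le> int n" "\<bar>b\<bar> \<le> int n"
    using x ab by (auto simp: prim_pairs_upto_def pair_height_def)
  show "x \<in> {(0,1), (0,-1), (1,0), (-1,0)} \<union> (\<Union>st\<in>{1, -1} \<times> {1, -1}. coprime_box (fst st) (snd st) n n)"
  proof (cases "a = 0 \<or> b = 0")
    case True
    then show ?thesis using c ab by (auto simp: abs_if split: if_splits)
  next
    case False
    then have "(sgn a, sgn b) \<in> {1, -1} \<times> {1, -1}" by (auto simp: sgn_if)
    moreover have "x \<in> coprime_box (sgn a) (sgn b) n n"
      using False c ab by (auto simp: coprime_box_def abs_if sgn_if)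
    ultimately show ?thesis by (intro UnI2 UN_I[of "(sgn a, sgn b)"]) auto
  qed
next
  fix x assume x: "x \<in> {(0,1), (0,-1), (1,0), (-1,0)} \<union> (\<Union>st\<in>{1, -1} \<times> {1, -1}. coprime_box (fst st) (snd st) n n)"
  show "x \<in> prim_pairs_upto n"
  proof (cases "x \<in> {(0,1), (0,-1), (1,0), (-1,0)}")
    case True
    then show ?thesis using assms by (auto simp: prim_pairs_upto_def pair_height_def)
  next
    case False
    with x obtain s t where st: "s \<in> {1, -1}" "t \<in> {1, -1}" "x \<in> coprime_box s t n n" by auto
    then have "\<bar>fst x\<bar> = s * fst x" "\<bar>snd x\<bar> = t * snd x" by (auto simp: coprime_box_def)
    with st show ?thesis by (auto simp: prim_pairs_upto_def coprime_box_def pair_height_def)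
  qed
qed

lemma card_prim_pairs_upto:
  assumes "n \<ge> 1"
  shows "card (prim_pairs_upto n) = 4 + 4 * coprime_count n n"
proof -
  define I where "I = ({1, -1} \<times> {1, -1} :: (int \<times> int) set)"
  define U where "U = (\<Union>st\<in>I. coprime_box (fst st) (snd st) n n)"
  have "card U = (\<Sum>st\<in>I. card (coprime_box (fst st) (snd st) n n))"
    unfolding U_def
    by (rule card_UN_disjoint) (simp_all add: I_def finite_coprime_box, auto simp: coprime_box_def)
  also have "\<dots> = (\<Sum>st\<in>I. coprime_count n n)"
    by (intro sum.cong refl) (auto simp: I_def card_coprime_box)
  finally have "card U = 4 * coprime_count n n" by (simp add: I_def)
  moreover have "{(0,1), (0,-1), (1,0), (-1,0)} \<inter> U = {}" by (auto simp: U_def I_def coprime_box_def)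
  moreover have "finite U" by (auto simp: U_def I_def finite_coprime_box)
  ultimately show ?thesis
    unfolding prim_pairs_upto_eq[OF assms] I_def[symmetric] U_def[symmetric] by (simp add: card_Un_disjoint)
qed

section \<open>A parametrisation of V\<close>

definition V_vec :: "vec4 set" where
  "V_vec = {v. primitive4 v \<and>
     (case v of (x0,x1,x2,x3) \<Rightarrow> x0^2 * x2 = x1^2 * x3 \<and> \<not> (x0 = 0 \<and> x1 = 0))}"

definition V_param :: "((int \<times> int) \<times> (int \<times> int)) set" where
  "V_param = {((a,b),(g,u)). coprime a b \<and> g \<ge> 1 \<and> coprime g u}"

definition V_of_param :: "(int \<times> int) \<times> (int \<times> int) \<Rightarrow> vec4" where
  "V_of_param x = (case x of ((a,b),(g,u)) \<Rightarrow> (g*a, g*b, u*b^2, u*a^2))"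

definition param_height :: "(int \<times> int) \<times> (int \<times> int) \<Rightarrow> int" where
  "param_height x = (case x of ((a,b),(g,u)) \<Rightarrow> max (g * pair_height (a,b)) (\<bar>u\<bar> * pair_height (a,b)^2))"

lemma primitive4_iff: "primitive4 (x0,x1,x2,x3) \<longleftrightarrow> gcd x0 (gcd x1 (gcd x2 x3)) = 1"
  by (simp add: primitive4_def)

lemma V_of_param_in_V_vec:
  assumes "((a,b),(g,u)) \<in> V_param"
  shows "V_of_param ((a,b),(g,u)) \<in> V_vec"
proof -
  have c: "coprime a b" "g \<ge> 1" "coprime g u" using assms by (auto simp: V_param_def)
  have "gcd (g*a) (g*b) = g" using c(1,2) gcd_mult_distrib_int[of g a b] by (simp add: coprime_iff_gcd_eq_1)
  moreover have "coprime (b^2) (a^2)" using c(1) by (simp add: coprime_commute)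
  then have "gcd (u*b^2) (u*a^2) = \<bar>u\<bar>"
    using gcd_mult_distrib_int[of u "b^2" "a^2"] by (simp add: coprime_iff_gcd_eq_1)
  ultimately have "gcd (g*a) (gcd (g*b) (gcd (u*b^2) (u*a^2))) = 1"
    using c(3) by (simp add: gcd.assoc[symmetric] coprime_iff_gcd_eq_1)
  moreover have "(g*a)^2 * (u*b^2) = (g*b)^2 * (u*a^2)" by (simp add: algebra_simps power2_eq_square)
  moreover have "\<not> (g*a = 0 \<and> g*b = 0)" using c(1,2) by auto
  ultimately show ?thesis by (simp add: V_vec_def V_of_param_def primitive4_iff) blast
qed

lemma inj_on_V_of_param: "inj_on V_of_param V_param"
proof (rule inj_onI)
  fix x y assume "x \<in> V_param" "y \<in> V_param" and eq: "V_of_param x = V_of_param y"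
  then obtain a b g u a' b' g' u' where xy: "x = ((a,b),(g,u))" "y = ((a',b'),(g',u'))"
      and c: "coprime a b" "g \<ge> 1" "coprime a' b'" "g' \<ge> 1"
    by (auto simp: V_param_def)
  have e: "g*a = g'*a'" "g*b = g'*b'" "u*b^2 = u'*b'^2" "u*a^2 = u'*a'^2"
    using eq by (auto simp: xy V_of_param_def)
  have "g = gcd (g*a) (g*b)" "g' = gcd (g'*a') (g'*b')"
    using c gcd_mult_distrib_int[of g a b] gcd_mult_distrib_int[of g' a' b']
    by (simp_all add: coprime_iff_gcd_eq_1)
  then have "g = g'" using e by simp
  with e c have "a = a'" "b = b'" by auto
  moreover have "\<not> (a = 0 \<and> b = 0)" using c(1) by auto
  ultimately have "u = u'" using e(3,4) by auto
  with \<open>g = g'\<close> \<open>a = a'\<close> \<open>b = b'\<close> show "x = y" by (simp add: xy)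
qed

lemma coprime_square_cross_eq:
  fixes a b x y :: int
  assumes "coprime a b" "a^2 * x = b^2 * y"
  obtains u where "x = u * b^2" "y = u * a^2"
proof (cases "b = 0")
  case True
  with assms have "\<bar>a\<bar> = 1" by simp
  then have "a^2 = 1" by (metis power2_abs power_one)
  with True assms(2) show thesis by (intro that[of y]) auto
next
  case False
  have "coprime (b^2) (a^2)" using assms(1) by (simp add: coprime_commute)
  moreover have "b^2 dvd a^2 * x" using assms(2) by simp
  ultimately obtain u where u: "x = b^2 * u" by (auto simp: coprime_dvd_mult_right_iff)
  with assms(2) have "b^2 * (u * a^2) = b^2 * y" by (simp add: algebra_simps)
  with False u show thesis by (intro that[of u]) (simp_all add: mult.commute)
qed

lemma V_vec_subset_image: "V_vec \<subseteq> V_of_param ` V_param"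
proof
  fix v assume "v \<in> V_vec"
  then obtain x0 x1 x2 x3 where v: "v = (x0,x1,x2,x3)" and prim: "gcd x0 (gcd x1 (gcd x2 x3)) = 1"
      and eq: "x0^2 * x2 = x1^2 * x3" and nz: "\<not> (x0 = 0 \<and> x1 = 0)"
    by (auto simp: V_vec_def primitive4_iff)
  define g where "g = gcd x0 x1"
  define a where "a = x0 div g"
  define b where "b = x1 div g"
  have "g \<ge> 1" using nz by (simp add: g_def) (smt (verit) gcd_eq_0_iff gcd_ge_0_int)
  have x01: "x0 = g * a" "x1 = g * b" by (simp_all add: a_def b_def g_def)
  have "coprime a b" using nz by (simp add: a_def b_def g_def div_gcd_coprime)
  moreover have "a^2 * x2 = b^2 * x3"
  proof -
    have "g^2 * (a^2 * x2) = g^2 * (b^2 * x3)"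
      using eq unfolding x01 by (simp add: algebra_simps)
    then show ?thesis using \<open>g \<ge> 1\<close> by simp
  qed
  ultimately obtain u where x23: "x2 = u * b^2" "x3 = u * a^2" by (rule coprime_square_cross_eq)
  have "coprime g u"
  proof (rule coprimeI)
    fix c assume "c dvd g" "c dvd u"
    then have "c dvd gcd x0 (gcd x1 (gcd x2 x3))" by (simp add: x01 x23)
    then show "is_unit c" using prim by simp
  qed
  with \<open>coprime a b\<close> \<open>g \<ge> 1\<close> have "((a,b),(g,u)) \<in> V_param" by (simp add: V_param_def)
  moreover have "v = V_of_param ((a,b),(g,u))" by (simp add: v x01 x23 V_of_param_def mult.commute)
  ultimately show "v \<in> V_of_param ` V_param" by (rule rev_image_eqI)
qed

lemma V_of_param_image: "V_of_param ` V_param = V_vec"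
  using V_of_param_in_V_vec V_vec_subset_image by (auto simp: V_param_def)

lemma hgt4_V_of_param:
  assumes "((a,b),(g,u)) \<in> V_param"
  shows "hgt4 (V_of_param ((a,b),(g,u))) = real_of_int (param_height ((a,b),(g,u)))"
proof -
  have "g \<ge> 1" using assms by (simp add: V_param_def)
  then have m1: "max (\<bar>g*a\<bar>) (\<bar>g*b\<bar>) = g * max (\<bar>a\<bar>) (\<bar>b\<bar>)"
    by (simp add: abs_mult max_def mult_le_cancel_left)
  have m2: "max (\<bar>u*b^2\<bar>) (\<bar>u*a^2\<bar>) = \<bar>u\<bar> * (max (\<bar>a\<bar>) (\<bar>b\<bar>))^2"
  proof (cases "\<bar>a\<bar> \<le> \<bar>b\<bar>")
    case True
    then have "\<bar>u\<bar> * a^2 \<le> \<bar>u\<bar> * b^2" by (simp add: abs_le_square_iff mult_left_mono)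
    with True show ?thesis by (simp add: abs_mult max_def)
  next
    case False
    then have "\<bar>u\<bar> * b^2 \<le> \<bar>u\<bar> * a^2" by (simp add: abs_le_square_iff mult_left_mono)
    with False show ?thesis by (simp add: abs_mult max_def)
  qed
  show ?thesis
    unfolding V_of_param_def hgt4_def param_height_def pair_height_def prod.case fst_conv snd_conv m1 m2 ..
qed

lemma int_mult_le_iff_le_div:
  assumes "h > 0" "m \<ge> 0"
  shows "m * int h \<le> int n \<longleftrightarrow> m \<le> int (n div h)"
proof -
  obtain k where k: "m = int k" using \<open>m \<ge> 0\<close> by (metis nonneg_int_cases)
  have "m * int h \<le> int n \<longleftrightarrow> k * h \<le> n" unfolding k by (metis of_nat_le_iff of_nat_mult)
  also have "\<dots> \<longleftrightarrow> k \<le> n div h" using \<open>h > 0\<close> by (simp add: less_eq_div_iff_mult_less_eq)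
  finally show ?thesis unfolding k by simp
qed

definition param_fibre :: "nat \<Rightarrow> nat \<Rightarrow> (int \<times> int) set" where
  "param_fibre n h = {x. fst x \<ge> 1 \<and> coprime (fst x) (snd x)
                        \<and> fst x * int h \<le> int n \<and> \<bar>snd x\<bar> * int h ^ 2 \<le> int n}"

lemma
  assumes "1 \<le> h" "h \<le> n"
  shows card_param_fibre: "card (param_fibre n h) = 1 + 2 * coprime_count (n div h) (n div h ^ 2)"
    and finite_param_fibre: "finite (param_fibre n h)"
proof -
  define X where "X = n div h"
  define Y where "Y = n div h ^ 2"
  have "h > 0" "h ^ 2 > 0" using assms by auto
  have "param_fibre n h = insert (1, 0) (coprime_box 1 1 X Y \<union> coprime_box 1 (-1) X Y)"
  proof (intro equalityI subsetI)
    fix x assume "x \<in> param_fibre n h"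
    then obtain g u where x: "x = (g, u)" "g \<ge> 1" "coprime g u" "g \<le> int X" "\<bar>u\<bar> \<le> int Y"
      using int_mult_le_iff_le_div[OF \<open>h > 0\<close>] int_mult_le_iff_le_div[OF \<open>h ^ 2 > 0\<close>]
      by (cases x) (auto simp: param_fibre_def X_def Y_def)
    show "x \<in> insert (1, 0) (coprime_box 1 1 X Y \<union> coprime_box 1 (-1) X Y)"
    proof (cases "u = 0")
      case True
      with x show ?thesis by simp
    next
      case False
      with x show ?thesis by (auto simp: coprime_box_def abs_if split: if_splits)
    qed
  next
    fix x assume x: "x \<in> insert (1, 0) (coprime_box 1 1 X Y \<union> coprime_box 1 (-1) X Y)"
    show "x \<in> param_fibre n h"
    proof (cases "x = (1, 0)")
      case True
      with assms show ?thesis by (simp add: param_fibre_def)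
    next
      case False
      with x obtain t where t: "t \<in> {1, -1}" "x \<in> coprime_box 1 t X Y" by auto
      then have "\<bar>snd x\<bar> = t * snd x" by (auto simp: coprime_box_def)
      with t show ?thesis
        using int_mult_le_iff_le_div[OF \<open>h > 0\<close>] int_mult_le_iff_le_div[OF \<open>h ^ 2 > 0\<close>]
        by (simp add: param_fibre_def coprime_box_def X_def Y_def)
    qed
  qed
  moreover have "coprime_box 1 1 X Y \<inter> coprime_box 1 (-1) X Y = {}" by (auto simp: coprime_box_def)
  moreover have "(1, 0) \<notin> coprime_box 1 1 X Y \<union> coprime_box 1 (-1) X Y" by (auto simp: coprime_box_def)
  moreover note finite_coprime_box[of 1 1 X Y] finite_coprime_box[of 1 "-1" X Y]
    card_coprime_box[of 1 1 X Y] card_coprime_box[of 1 "-1" X Y]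
  ultimately show "card (param_fibre n h) = 1 + 2 * coprime_count (n div h) (n div h ^ 2)"
    and "finite (param_fibre n h)"
    by (simp_all add: card_Un_disjoint X_def Y_def)
qed

lemma param_height_le_eq_Sigma:
  "{x \<in> V_param. param_height x \<le> int n}
     = Sigma (prim_pairs_upto n) (\<lambda>ab. param_fibre n (nat (pair_height ab)))"
proof (intro equalityI subsetI)
  fix x assume x: "x \<in> {x \<in> V_param. param_height x \<le> int n}"
  then obtain a b g u where xd: "x = ((a,b),(g,u))" by (metis prod.collapse)
  have c: "coprime a b" "g \<ge> 1" "coprime g u"
    "max (g * pair_height (a,b)) (\<bar>u\<bar> * pair_height (a,b)^2) \<le> int n"
    using x xd by (auto simp: V_param_def param_height_def)
  have "pair_height (a,b) \<ge> 1" using pair_height_ge_1[of "(a,b)"] c(1) by simp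
  moreover from this c(2) have "pair_height (a,b) \<le> g * pair_height (a,b)" by simp
  with c(4) have "pair_height (a,b) \<le> int n" by linarith
  ultimately show "x \<in> Sigma (prim_pairs_upto n) (\<lambda>ab. param_fibre n (nat (pair_height ab)))"
    using c by (auto simp: xd prim_pairs_upto_def param_fibre_def)
next
  fix x assume x: "x \<in> Sigma (prim_pairs_upto n) (\<lambda>ab. param_fibre n (nat (pair_height ab)))"
  then obtain a b g u where xd: "x = ((a,b),(g,u))" by (metis prod.collapse)
  have "coprime a b" "(g,u) \<in> param_fibre n (nat (pair_height (a,b)))"
    using x xd by (auto simp: prim_pairs_upto_def)
  moreover from this have "pair_height (a,b) \<ge> 1" using pair_height_ge_1[of "(a,b)"] by simp
  ultimately show "x \<in> {x \<in> V_param. param_height x \<le> int n}"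
    by (simp add: xd param_fibre_def V_param_def param_height_def)
qed

lemma V_vec_height_le_eq_image:
  "{v \<in> V_vec. hgt4 v \<le> real n} = V_of_param ` {x \<in> V_param. param_height x \<le> int n}"
  using V_of_param_image hgt4_V_of_param by (force simp: image_iff)

lemma
  shows card_V_vec_height_le:
    "card {v \<in> V_vec. hgt4 v \<le> real n}
       = (\<Sum>k=1..n. prim_count k * (1 + 2 * coprime_count (n div k) (n div k^2)))"
    and finite_V_vec_height_le: "finite {v \<in> V_vec. hgt4 v \<le> real n}"
proof -
  have height_range: "nat (pair_height ab) \<in> {1..n}" if "ab \<in> prim_pairs_upto n" for ab
    using that pair_height_ge_1 by (force simp: prim_pairs_upto_def)
  have fibres: "finite (param_fibre n (nat (pair_height ab)))" if "ab \<in> prim_pairs_upto n" for ab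
    using height_range[OF that] by (simp add: finite_param_fibre)
  have "card {v \<in> V_vec. hgt4 v \<le> real n} = card {x \<in> V_param. param_height x \<le> int n}"
    unfolding V_vec_height_le_eq_image by (intro card_image inj_on_subset[OF inj_on_V_of_param]) auto
  also have "\<dots> = (\<Sum>ab\<in>prim_pairs_upto n. card (param_fibre n (nat (pair_height ab))))"
    unfolding param_height_le_eq_Sigma using fibres by (intro card_SigmaI finite_prim_pairs_upto) auto
  also have "\<dots> = (\<Sum>k\<in>{1..n}. \<Sum>ab\<in>{ab \<in> prim_pairs_upto n. nat (pair_height ab) = k}.
                    card (param_fibre n (nat (pair_height ab))))"
    using height_range by (intro sum.group[symmetric]) (auto simp: finite_prim_pairs_upto)
  also have "\<dots> = (\<Sum>k=1..n. prim_count k * (1 + 2 * coprime_count (n div k) (n div k^2)))"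
  proof (intro sum.cong refl)
    fix k assume k: "k \<in> {1..n}"
    then have "{ab \<in> prim_pairs_upto n. nat (pair_height ab) = k} = prim_pairs_of_height k"
      using pair_height_ge_1 by (force simp: prim_pairs_upto_def prim_pairs_of_height_def)
    moreover have "(\<Sum>ab\<in>prim_pairs_of_height k. card (param_fibre n (nat (pair_height ab))))
        = (\<Sum>ab\<in>prim_pairs_of_height k. 1 + 2 * coprime_count (n div k) (n div k^2))"
      using k by (intro sum.cong refl) (simp add: prim_pairs_of_height_def card_param_fibre)
    ultimately show "(\<Sum>ab\<in>{ab \<in> prim_pairs_upto n. nat (pair_height ab) = k}.
                 card (param_fibre n (nat (pair_height ab))))
        = prim_count k * (1 + 2 * coprime_count (n div k) (n div k^2))"
      by (simp add: prim_count_def)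
  qed
  finally show "card {v \<in> V_vec. hgt4 v \<le> real n}
      = (\<Sum>k=1..n. prim_count k * (1 + 2 * coprime_count (n div k) (n div k^2)))" .
  show "finite {v \<in> V_vec. hgt4 v \<le> real n}"
    unfolding V_vec_height_le_eq_image param_height_le_eq_Sigma
    by (intro finite_imageI finite_SigmaI finite_prim_pairs_upto fibres)
qed

section \<open>Counting the points of V(Q) by height\<close>

lemma card_involution_orbits:
  assumes "finite X" and maps: "\<And>x. x \<in> X \<Longrightarrow> \<nu> x \<in> X"
    and inv: "\<And>x. x \<in> X \<Longrightarrow> \<nu> (\<nu> x) = x" and no_fix: "\<And>x. x \<in> X \<Longrightarrow> \<nu> x \<noteq> x"
  shows "2 * card ((\<lambda>x. {x, \<nu> x}) ` X) = card X"
proof -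
  have "2 * card ((\<lambda>x. {x, \<nu> x}) ` X) = card (\<Union> ((\<lambda>x. {x, \<nu> x}) ` X))"
  proof (rule card_partition)
    show "card c = 2" if "c \<in> (\<lambda>x. {x, \<nu> x}) ` X" for c
      using that no_fix by (auto simp: card_2_iff)
    show "c1 \<inter> c2 = {}" if "c1 \<in> (\<lambda>x. {x, \<nu> x}) ` X" "c2 \<in> (\<lambda>x. {x, \<nu> x}) ` X" "c1 \<noteq> c2" for c1 c2
      using that inv by auto metis+
  qed (use \<open>finite X\<close> maps in \<open>auto intro: finite_subset[OF _ \<open>finite X\<close>]\<close>)
  moreover have "\<Union> ((\<lambda>x. {x, \<nu> x}) ` X) = X" using maps by auto
  ultimately show ?thesis by simp
qed

lemma neg4_neg4 [simp]: "neg4 (neg4 v) = v"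
  by (simp add: neg4_def split: prod.splits)

lemma hgt4_neg4 [simp]: "hgt4 (neg4 v) = hgt4 v"
  by (simp add: neg4_def hgt4_def split: prod.splits)

lemma H3_pair [simp]: "H3 {v, neg4 v} = hgt4 v"
  by (simp add: H3_def)

lemma neg4_in_V_vec: "v \<in> V_vec \<Longrightarrow> neg4 v \<in> V_vec"
  by (auto simp: neg4_def V_vec_def primitive4_def split: prod.splits)

lemma neg4_neq: "v \<in> V_vec \<Longrightarrow> neg4 v \<noteq> v"
  by (auto simp: neg4_def V_vec_def split: prod.splits)

lemma V_Q_eq: "V_Q = (\<lambda>v. {v, neg4 v}) ` V_vec"
  by (auto simp: V_Q_def V_vec_def)

lemma
  shows card_V_Q_height_le: "2 * card {P \<in> V_Q. H3 P \<le> real n} = card {v \<in> V_vec. hgt4 v \<le> real n}"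
    and finite_V_Q_height_le: "finite {P \<in> V_Q. H3 P \<le> real n}"
proof -
  have eq: "{P \<in> V_Q. H3 P \<le> real n} = (\<lambda>v. {v, neg4 v}) ` {v \<in> V_vec. hgt4 v \<le> real n}"
    by (auto simp: V_Q_eq)
  show "2 * card {P \<in> V_Q. H3 P \<le> real n} = card {v \<in> V_vec. hgt4 v \<le> real n}"
    unfolding eq using finite_V_vec_height_le
    by (rule card_involution_orbits) (auto simp: neg4_in_V_vec neg4_neq)
  show "finite {P \<in> V_Q. H3 P \<le> real n}"
    unfolding eq using finite_V_vec_height_le by simp
qed

lemma H3_V_Q:
  assumes "P \<in> V_Q"
  obtains m :: nat where "m \<ge> 1" "H3 P = real m"
proof -
  obtain x0 x1 x2 x3 where "P = {(x0,x1,x2,x3), neg4 (x0,x1,x2,x3)}" "\<not> (x0 = 0 \<and> x1 = 0)"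
    using assms by (auto simp: V_Q_eq V_vec_def)
  then show thesis
    by (intro that[of "nat (max (max \<bar>x0\<bar> \<bar>x1\<bar>) (max \<bar>x2\<bar> \<bar>x3\<bar>))"]) (auto simp: hgt4_def)
qed

lemma infsum_eq_suminf_fibres:
  fixes f :: "'a \<Rightarrow> real" and deg :: "'a \<Rightarrow> nat"
  assumes nonneg: "\<And>x. x \<in> S \<Longrightarrow> f x \<ge> 0" and fin: "\<And>k. finite {x\<in>S. deg x = k}"
    and summable: "summable (\<lambda>k. \<Sum>x\<in>{x\<in>S. deg x = k}. f x)"
  shows "infsum f S = (\<Sum>k. \<Sum>x\<in>{x\<in>S. deg x = k}. f x)"
proof -
  define F where "F k = {x\<in>S. deg x = k}" for k
  define G where "G k = sum f (F k)" for k
  have G: "(G has_sum suminf G) UNIV"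
    using summable unfolding G_def F_def
    by (intro sums_nonneg_imp_has_sum summable_sums sum_nonneg nonneg) auto
  have fibre: "((\<lambda>y. (f \<circ> snd) (k, y)) has_sum G k) (F k)" for k
    using fin[of k] by (simp add: G_def F_def)
  have "((f \<circ> snd) has_sum suminf G) (Sigma UNIV F)"
    using fibre G by (intro has_sum_SigmaI summable_on_SigmaI[OF fibre]) (auto simp: F_def nonneg has_sum_iff)
  moreover have "inj_on snd (Sigma UNIV F)" by (auto simp: inj_on_def F_def)
  moreover have "S = snd ` Sigma UNIV F" by (force simp: F_def)
  ultimately have "(f has_sum suminf G) S" by (simp add: has_sum_reindex)
  then have "infsum f S = suminf G" by (rule infsumI)
  then show ?thesis unfolding G_def F_def .
qed

lemma P1_Q_eq: "P1_Q = (\<lambda>x. {x, - x}) ` {x. coprime (fst x) (snd x)}"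
  by (force simp: P1_Q_def)

lemma H1_pair: "H1 {x, - x} = real_of_int (pair_height x)"
  by (cases x) (simp add: H1_def pair_height_def)

lemma P1_height_fibre: "{P \<in> P1_Q. nat \<lfloor>H1 P\<rfloor> = k} = (\<lambda>x. {x, - x}) ` prim_pairs_of_height k"
proof -
  have "nat (pair_height x) = k \<longleftrightarrow> pair_height x = int k" if "coprime (fst x) (snd x)" for x
    using pair_height_ge_1[OF that] by auto
  then have "{x. coprime (fst x) (snd x) \<and> nat \<lfloor>H1 {x, - x}\<rfloor> = k} = prim_pairs_of_height k"
    by (auto simp only: H1_pair floor_of_int prim_pairs_of_height_def mem_Collect_eq)
  moreover have "{P \<in> f ` A. Q P} = f ` {x \<in> A. Q (f x)}" for f :: "int \<times> int \<Rightarrow> (int \<times> int) set" and A Q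
    by auto
  ultimately show ?thesis unfolding P1_Q_eq by simp
qed

lemma card_P1_height_fibre: "2 * card {P \<in> P1_Q. nat \<lfloor>H1 P\<rfloor> = k} = prim_count k"
  unfolding P1_height_fibre prim_count_def
  by (rule card_involution_orbits[OF finite_prim_pairs_of_height])
    (auto simp: prim_pairs_of_height_def pair_height_def prod_eq_iff)

lemma finite_P1_height_fibre: "finite {P \<in> P1_Q. nat \<lfloor>H1 P\<rfloor> = k}"
  unfolding P1_height_fibre by (simp add: finite_prim_pairs_of_height)

lemma summable_prim_count_cube: "summable (\<lambda>k. real (prim_count (Suc k)) / real (Suc k) ^ 3)"
proof (rule summable_comparison_test'[OF summable_mult[OF summable_inverse_Suc_square, of 12]])
  fix k
  have "real (prim_count (Suc k)) \<le> 12 * real (Suc k)" using prim_count_le[of "Suc k"] by simp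
  then have "real (prim_count (Suc k)) / real (Suc k) ^ 3 \<le> 12 * real (Suc k) / real (Suc k) ^ 3"
    by (intro divide_right_mono) auto
  also have "\<dots> = 12 * (1 / real (Suc k) ^ 2)"
    using of_nat_0_less_iff[of "Suc k"]
    by (simp add: power3_eq_cube power2_eq_square field_simps del: of_nat_Suc)
  finally show "norm (real (prim_count (Suc k)) / real (Suc k) ^ 3) \<le> 12 * (1 / real (Suc k) ^ 2)"
    by simp
qed

lemma Z_P1_3_eq: "Z_P1 3 = (\<Sum>k. real (prim_count (Suc k)) / real (Suc k) ^ 3) / 2"
proof -
  define F where "F k = {P \<in> P1_Q. nat \<lfloor>H1 P\<rfloor> = k}" for k
  have fibre_sum: "(\<Sum>P\<in>F k. H1 P powr (-3)) = real (prim_count k) / real k ^ 3 / 2" for k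
  proof -
    have "H1 P = real k" if "P \<in> F k" for P
    proof -
      from that obtain x where "x \<in> prim_pairs_of_height k" "P = {x, - x}"
        by (auto simp: F_def P1_height_fibre)
      then show ?thesis by (simp add: H1_pair prim_pairs_of_height_def)
    qed
    then have "(\<Sum>P\<in>F k. H1 P powr (-3)) = real (card (F k)) * real k powr (-3)" by simp
    also have "real (card (F k)) = real (prim_count k) / 2"
      using arg_cong[OF card_P1_height_fibre[of k], of real] by (simp add: F_def)
    also have "real k powr (-3) = 1 / real k ^ 3"
      by (cases "k = 0") (simp_all add: powr_minus powr_realpow divide_inverse)
    finally show ?thesis by simp
  qed
  have "summable (\<lambda>k. real (prim_count k) / real k ^ 3 / 2)"
    using summable_divide[OF summable_prim_count_cube, of 2] by (subst (asm) summable_Suc_iff)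
  then have "Z_P1 3 = (\<Sum>k. \<Sum>P\<in>F k. H1 P powr (-3))"
    unfolding Z_P1_def F_def
    by (intro infsum_eq_suminf_fibres)
      (simp_all only: fibre_sum[unfolded F_def] finite_P1_height_fibre powr_ge_zero)
  also have "\<dots> = (\<Sum>k. real (prim_count k) / real k ^ 3 / 2)"
    by (simp only: fibre_sum)
  also have "\<dots> = (\<Sum>k. real (prim_count (Suc k)) / real (Suc k) ^ 3 / 2)"
    using suminf_split_head[OF \<open>summable _\<close>] by (simp add: prim_count_0)
  also have "\<dots> = (\<Sum>k. real (prim_count (Suc k)) / real (Suc k) ^ 3) / 2"
    by (rule suminf_divide[OF summable_prim_count_cube])
  finally show ?thesis .
qed

lemma card_V_Q_height_le_formula:
  assumes "n \<ge> 1"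
  shows "2 * real (card {P \<in> V_Q. H3 P \<le> real n}) =
         4 + 4 * real (coprime_count n n)
           + 2 * (\<Sum>k=1..n. real (prim_count k) * real (coprime_count (n div k) (n div k^2)))"
proof -
  \<comment> \<open>the first sum counts the fibre points (g, u) = (1, 0), i.e. the points (a : b : 0 : 0)\<close>
  have "2 * card {P \<in> V_Q. H3 P \<le> real n}
      = (\<Sum>k=1..n. prim_count k) + 2 * (\<Sum>k=1..n. prim_count k * coprime_count (n div k) (n div k^2))"
    by (simp add: card_V_Q_height_le card_V_vec_height_le sum.distrib sum_distrib_left algebra_simps)
  also have "(\<Sum>k=1..n. prim_count k) = 4 + 4 * coprime_count n n"
    using card_prim_pairs_upto_sum[of n] card_prim_pairs_upto[OF assms] by simp
  finally show ?thesis by (simp flip: of_nat_mult of_nat_add of_nat_sum)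
qed

lemma tendsto_prim_count_coprime_count_sum:
  "(\<lambda>n. (\<Sum>k=1..n. real (prim_count k) * real (coprime_count (n div k) (n div k^2))) / real n ^ 2)
     \<longlonglongrightarrow> (\<Sum>k. real (prim_count (Suc k)) / real (Suc k) ^ 3) / zeta2"
proof -
  define x where "x k n = real (prim_count (Suc k)) * real (coprime_count (n div Suc k) (n div (Suc k)^2))
                             / real n ^ 2" for k n
  have "(\<lambda>n. \<Sum>k<n. x k n)
      \<longlonglongrightarrow> (\<Sum>k. real (prim_count (Suc k)) * (1 / (zeta2 * real (Suc k) * real ((Suc k)^2))))"
  proof (rule tendsto_sum_lessThan_dominated[OF _ _ summable_mult[OF summable_inverse_Suc_square, of 12]])
    show "(\<lambda>n. x k n) \<longlonglongrightarrow> real (prim_count (Suc k)) * (1 / (zeta2 * real (Suc k) * real ((Suc k)^2)))"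
      for k
      unfolding x_def times_divide_eq_right[symmetric] by (intro tendsto_intros tendsto_coprime_count) auto
    show "\<bar>x k n\<bar> \<le> 12 * (1 / real (Suc k) ^ 2)" for k n
    proof -
      have "x k n \<le> real (prim_count (Suc k)) * (real (n div Suc k) / real n * (real (n div (Suc k)^2) / real n))"
        unfolding x_def times_divide_eq_right[symmetric]
        using coprime_count_le[of "n div Suc k" "n div (Suc k)^2"]
        by (intro mult_left_mono) (simp_all add: divide_right_mono power2_eq_square flip: of_nat_mult)
      also have "\<dots> \<le> (12 * real (Suc k)) * (1 / real (Suc k) * (1 / real ((Suc k)^2)))"
      proof (intro mult_mono)
        show "real (prim_count (Suc k)) \<le> 12 * real (Suc k)" using prim_count_le[of "Suc k"] by simp
      qed (use div_nat_over_le[of n "Suc k"] div_nat_over_le[of n "(Suc k)^2"] in simp_all)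
      also have "\<dots> = 12 * (1 / real (Suc k) ^ 2)"
        using of_nat_0_less_iff[of "Suc k"]
        by (simp only: of_nat_power) (simp add: power2_eq_square field_simps del: of_nat_Suc)
      finally show ?thesis by (simp add: x_def)
    qed
  qed
  moreover have "(\<Sum>k<n. x k n)
      = (\<Sum>k=1..n. real (prim_count k) * real (coprime_count (n div k) (n div k^2))) / real n ^ 2" for n
    by (simp add: x_def sum.atLeast1_atMost_eq sum_divide_distrib)
  moreover have "(\<Sum>k. real (prim_count (Suc k)) * (1 / (zeta2 * real (Suc k) * real ((Suc k)^2))))
      = (\<Sum>k. real (prim_count (Suc k)) / real (Suc k) ^ 3) / zeta2"
    by (subst suminf_divide[OF summable_prim_count_cube, symmetric])
      (simp add: power3_eq_cube power2_eq_square field_simps)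
  ultimately show ?thesis by simp
qed

lemma c_V_eq: "c_V = (2 + (\<Sum>k. real (prim_count (Suc k)) / real (Suc k) ^ 3)) / zeta2"
  using zeta2_pos by (simp add: c_V_def c_P1_def Z_P1_3_eq field_simps)

lemma tendsto_card_V_Q_height_le: "(\<lambda>n. real (card {P \<in> V_Q. H3 P \<le> real n}) / real n ^ 2) \<longlonglongrightarrow> c_V"
proof -
  have "(\<lambda>n. inverse (real n ^ 2)) \<longlonglongrightarrow> 0" by real_asymp
  moreover have "(\<lambda>n. real (coprime_count n n) / real n ^ 2) \<longlonglongrightarrow> 1 / zeta2"
    using tendsto_coprime_count[of 1 1] by simp
  ultimately have "(\<lambda>n. 2 * inverse (real n ^ 2) + 2 * (real (coprime_count n n) / real n ^ 2)
        + (\<Sum>k=1..n. real (prim_count k) * real (coprime_count (n div k) (n div k^2))) / real n ^ 2)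
      \<longlonglongrightarrow> 2 * 0 + 2 * (1 / zeta2) + (\<Sum>k. real (prim_count (Suc k)) / real (Suc k) ^ 3) / zeta2"
    by (intro tendsto_add tendsto_mult_left tendsto_prim_count_coprime_count_sum)
  moreover have "\<forall>\<^sub>F n in sequentially.
      2 * inverse (real n ^ 2) + 2 * (real (coprime_count n n) / real n ^ 2)
        + (\<Sum>k=1..n. real (prim_count k) * real (coprime_count (n div k) (n div k^2))) / real n ^ 2
      = real (card {P \<in> V_Q. H3 P \<le> real n}) / real n ^ 2"
    using eventually_ge_at_top[of 1]
  proof eventually_elim
    case (elim n)
    then have "real n ^ 2 > 0" by simp
    have "real (card {P \<in> V_Q. H3 P \<le> real n}) / real n ^ 2
        = 2 * real (card {P \<in> V_Q. H3 P \<le> real n}) / real n ^ 2 / 2" by simp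
    also have "\<dots> = (4 + 4 * real (coprime_count n n)
        + 2 * (\<Sum>k=1..n. real (prim_count k) * real (coprime_count (n div k) (n div k^2)))) / real n ^ 2 / 2"
      unfolding card_V_Q_height_le_formula[OF elim] ..
    also have "\<dots> = 2 * inverse (real n ^ 2) + 2 * (real (coprime_count n n) / real n ^ 2)
        + (\<Sum>k=1..n. real (prim_count k) * real (coprime_count (n div k) (n div k^2))) / real n ^ 2"
      using \<open>real n ^ 2 > 0\<close> by (simp add: field_simps)
    finally show ?case ..
  qed
  ultimately show ?thesis by (simp add: c_V_eq tendsto_cong add_divide_distrib)
qed

theorem mainTheorem13:
  shows "(\<lambda>B. real (count_pairs B)) \<sim>[at_top] (\<lambda>B. 2 * c_V^2 * B^2 * ln B)"
proof -
  define f where "f P = nat \<lfloor>H3 P\<rfloor>" for P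
  have H3_f: "H3 P = real (f P)" and f_pos: "f P \<ge> 1" if "P \<in> V_Q" for P
    using H3_V_Q[OF that] by (metis f_def floor_of_nat nat_int)+
  have level: "{P \<in> V_Q. f P \<le> n} = {P \<in> V_Q. H3 P \<le> real n}" for n
    using H3_f by auto
  have "c_V > 0"
    using zeta2_pos infsum_nonneg[of P1_Q "\<lambda>P. H1 P powr (-3)"]
    by (simp add: c_V_def c_P1_def Z_P1_def add_nonneg_pos)
  then have "(\<lambda>B. real (card {(P,Q). P \<in> V_Q \<and> Q \<in> V_Q \<and> real (f P) * real (f Q) \<le> B}))
      \<sim>[at_top] (\<lambda>B. 2 * c_V^2 * B^2 * ln B)"
    using f_pos finite_V_Q_height_le tendsto_card_V_Q_height_le
    by (intro card_pairs_height_product_asymp) (simp_all add: level)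
  moreover have "{(P,Q). P \<in> V_Q \<and> Q \<in> V_Q \<and> real (f P) * real (f Q) \<le> B}
      = {(P,Q). P \<in> V_Q \<and> Q \<in> V_Q \<and> H3 P * H3 Q \<le> B}" for B
    using H3_f by auto
  ultimately show ?thesis by (simp add: count_pairs_def)
qed

end
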